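(* Let $\Bbbk$ be an algebraically closed field of characteristic $p>2$, and let $\Psi_\Bbbk:Y_2^>(\Bbbk)\to W^{(2)}(\Bbbk)$ be the $\Bbbk$-algebra homomorphism with $e_r\mapsto x_1^r$. For every $k\in\mathbb{N}$, $$\mathrm{im}(\Psi_\Bbbk)\cap W^{(2)}_k(\Bbbk)\subset J_k:=\{f\in\Bbbk[x_1,\dots,x_k]^{\Sigma_k}:\ f=0 \text{ whenever } x_1=x_2+1=\dots=x_p+p-1\}$$ (for $k<p$ the condition is vacuous and $J_k=\Bbbk[x_1,\dots,x_k]^{\Sigma_k}$).
   Context: $\mathbb{N}=\{0,1,\dots\}$; $\frac12$ denotes the inverse of $2$ in $\Bbbk$. $Y_2^>(\Bbbk)$ is the $\Bbbk$-algebra generated by $e_r$ ($r\in\mathbb{N}$) with relations $[e_{r+1},e_s]-[e_r,e_{s+1}]=e_re_s+e_se_r$. $W^{(2)}(\Bbbk)=\bigoplus_{k\in\mathbb{N}}W^{(2)}_k(\Bbbk)$ with $W^{(2)}_k(\Bbbk)=\Bbbk[x_1,\dots,x_k]^{\Sigma_k}$, and product: for $F\in W_k$, $G\in W_\ell$, $F\star G=\sum_{\sigma}\sigma\big(F(x_1,\dots,x_k)G(x_{k+1},\dots,x_{k+\ell})\prod_{r\le k<r'}\frac{x_r-x_{r'}+1}{x_r-x_{r'}}\big)$, summing over $\sigma\in\Sigma_{k+\ell}$ with $\sigma(1)<\dots<\sigma(k)$ and $\sigma(k+1)<\dots<\sigma(k+\ell)$, acting by $x_r\mapsto x_{\sigma(r)}$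 (the result is a symmetric polynomial). *)

theory Defs
  imports "HOL-Computational_Algebra.Polynomial" "HOL-Library.Poly_Mapping"
    "HOL-Combinatorics.Permutations"
begin

text \<open>Multivariate polynomials over a field: finitely supported maps from
  monomials (exponent vectors, variable i stands for x_(i+1)) to coefficients.\<close>
type_synonym 'a mpoly = "(nat \<Rightarrow>\<^sub>0 nat) \<Rightarrow>\<^sub>0 'a"

definition mp_eval :: "'a::comm_ring_1 mpoly \<Rightarrow> (nat \<Rightarrow> 'a) \<Rightarrow> 'a" where
  "mp_eval f a = (\<Sum>m\<in>Poly_Mapping.keys f. Poly_Mapping.lookup f m * (\<Prod>i\<in>Poly_Mapping.keys m. a i ^ Poly_Mapping.lookup m i))"

definition mp_const :: "'a::zero \<Rightarrow> 'a mpoly" where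
  "mp_const c = Poly_Mapping.single 0 c"

definition mp_x0pow :: "nat \<Rightarrow> 'a::{zero,one} mpoly" where
  "mp_x0pow r = Poly_Mapping.single (Poly_Mapping.single 0 r) 1"

text \<open>W_k: symmetric polynomials in the variables x_1..x_k (indices 0..k-1).
  The permutation \<sigma> sends x_i to x_(\<sigma> i), so the monomial m goes to m'
  with m'(\<sigma> i) = m i.\<close>
definition Wk :: "nat \<Rightarrow> 'a::comm_ring_1 mpoly set" where
  "Wk k = {f. (\<forall>m\<in>Poly_Mapping.keys f. Poly_Mapping.keys m \<subseteq> {..<k}) \<and>
     (\<forall>\<sigma>. \<sigma> permutes {..<k} \<longrightarrow>
        (\<forall>m m'. (\<forall>i. Poly_Mapping.lookup m' (\<sigma> i) = Poly_Mapping.lookup m i) \<longrightarrow> Poly_Mapping.lookup f m' = Poly_Mapping.lookup f m))}"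

definition shuffles :: "nat \<Rightarrow> nat \<Rightarrow> (nat \<Rightarrow> nat) set" where
  "shuffles k l = {\<sigma>. \<sigma> permutes {..<k+l} \<and> strict_mono_on {..<k} \<sigma>
                        \<and> strict_mono_on {k..<k+l} \<sigma>}"

text \<open>The shuffle product F \<star> G of F \<in> W_k, G \<in> W_l: the (unique) element of
  W_(k+l) which agrees with the defining rational expression at every point
  where the denominators x_r - x_r' do not vanish (all coordinates distinct).\<close>
definition star :: "nat \<Rightarrow> nat \<Rightarrow> 'a::field mpoly \<Rightarrow> 'a mpoly \<Rightarrow> 'a mpoly" where
  "star k l F G = (THE H. H \<in> Wk (k+l) \<and>
     (\<forall>a. inj_on a {..<k+l} \<longrightarrow>
        mp_eval H a = (\<Sum>\<sigma>\<in>shuffles k l.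
           mp_eval F (\<lambda>i. a (\<sigma> i)) * mp_eval G (\<lambda>i. a (\<sigma> (i + k))) *
           (\<Prod>r<k. \<Prod>r'\<in>{k..<k+l}.
              (a (\<sigma> r) - a (\<sigma> r') + 1) / (a (\<sigma> r) - a (\<sigma> r'))))))"

text \<open>Elements of W = \<Oplus>_k W_k, as graded families with finite support.\<close>
definition Wtot :: "(nat \<Rightarrow> 'a::comm_ring_1 mpoly) set" where
  "Wtot = {w. (\<forall>k. w k \<in> Wk k) \<and> finite {k. w k \<noteq> 0}}"

definition Wmult :: "(nat \<Rightarrow> 'a::field mpoly) \<Rightarrow> (nat \<Rightarrow> 'a mpoly) \<Rightarrow> nat \<Rightarrow> 'a mpoly" where
  "Wmult w v n = (\<Sum>k\<le>n. star k (n - k) (w k) (v (n - k)))"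

definition Wone :: "nat \<Rightarrow> 'a::field mpoly" where
  "Wone n = (if n = 0 then mp_const 1 else 0)"

definition Wscale :: "'a::field \<Rightarrow> (nat \<Rightarrow> 'a mpoly) \<Rightarrow> nat \<Rightarrow> 'a mpoly" where
  "Wscale c w n = Poly_Mapping.map ((*) c) (w n)"

text \<open>\<Psi>(e_r) = x_1^r \<in> W_1.\<close>
definition Psi_gen :: "nat \<Rightarrow> nat \<Rightarrow> 'a::field mpoly" where
  "Psi_gen r n = (if n = 1 then mp_x0pow r else 0)"

text \<open>The image of the algebra homomorphism \<Psi> is the subalgebra of W generated
  by the images \<Psi>(e_r) of the generators e_r.\<close>
inductive_set imPsi :: "(nat \<Rightarrow> 'a::field mpoly) set" where
  gen: "Psi_gen r \<in> imPsi"
| one: "Wone \<in> imPsi"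
| add: "w \<in> imPsi \<Longrightarrow> v \<in> imPsi \<Longrightarrow> (\<lambda>n. w n + v n) \<in> imPsi"
| scale: "w \<in> imPsi \<Longrightarrow> Wscale c w \<in> imPsi"
| mult: "w \<in> imPsi \<Longrightarrow> v \<in> imPsi \<Longrightarrow> Wmult w v \<in> imPsi"

definition Jk :: "nat \<Rightarrow> nat \<Rightarrow> 'a::field mpoly set" where
  "Jk p k = {f \<in> Wk k. p \<le> k \<longrightarrow>
      (\<forall>a. (\<forall>i<p. a i + of_nat i = a 0) \<longrightarrow> mp_eval f a = 0)}"

end

theory Submission
  imports Defs
begin

text \<open>The image of \<open>\<Psi>\<close> is generated by the elements \<open>x\<^sub>1\<^sup>r \<in> W\<^sub>1\<close> under sums, scalar
  multiples and the shuffle product, so it suffices to find a subspace of \<open>W\<close> containing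
  \<open>W\<^sub>k\<close> for \<open>k < p\<close> and closed under \<open>\<star>\<close>. We take the symmetric polynomials vanishing
  whenever some \<open>p\<close> of the variables form a chain \<open>x\<^sub>i\<^sub>0 = x\<^sub>i\<^sub>1 + 1 = \<dots> = x\<^sub>i\<^sub>p\<^sub>-\<^sub>1 + p - 1\<close>.
  In characteristic \<open>p\<close> such a chain is cyclic (also \<open>x\<^sub>i\<^sub>p\<^sub>-\<^sub>1 = x\<^sub>i\<^sub>0 + 1\<close>) and its values
  are distinct. At a point with distinct coordinates each shuffle in \<open>F \<star> G\<close> either puts the
  whole chain into the variables of \<open>F\<close> or of \<open>G\<close>, where that factor vanishes, or separates
  two cyclically consecutive chain variables \<open>x\<^sub>r\<close>, \<open>x\<^sub>r\<^sub>'\<close>, where \<open>x\<^sub>r - x\<^sub>r\<^sub>' + 1\<close> vanishes;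
  the remaining coordinates can be perturbed to make the point injective.

  Since \<open>\<star>\<close> is only specified at points with distinct coordinates, most of the work goes into
  showing that the shuffle formula is a symmetric polynomial: multiplied by the Vandermonde
  product it becomes an alternating polynomial, which in characteristic \<open>\<noteq> 2\<close> is divisible
  by the Vandermonde product.\<close>

definition monom_eval :: "(nat \<Rightarrow>\<^sub>0 nat) \<Rightarrow> (nat \<Rightarrow> 'a::comm_ring_1) \<Rightarrow> 'a" where
  "monom_eval m a = (\<Prod>i\<in>Poly_Mapping.keys m. a i ^ Poly_Mapping.lookup m i)"

definition vars_below :: "nat \<Rightarrow> 'a::zero mpoly \<Rightarrow> bool" where
  "vars_below n f \<longleftrightarrow> (\<forall>m\<in>Poly_Mapping.keys f. Poly_Mapping.keys m \<subseteq> {..<n})"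

lemma monom_eval_superset:
  assumes "finite S" "Poly_Mapping.keys m \<subseteq> S"
  shows "monom_eval m a = (\<Prod>i\<in>S. a i ^ Poly_Mapping.lookup m i)"
  unfolding monom_eval_def
  by (rule prod.mono_neutral_left[OF assms]) (auto simp: in_keys_iff)

lemma monom_eval_add: "monom_eval (m + m') a = monom_eval m a * monom_eval m' a"
proof -
  let ?S = "Poly_Mapping.keys m \<union> Poly_Mapping.keys m'"
  have "monom_eval (m + m') a = (\<Prod>i\<in>?S. a i ^ Poly_Mapping.lookup (m + m') i)"
    by (rule monom_eval_superset) (auto simp: keys_add)
  also have "\<dots> = (\<Prod>i\<in>?S. a i ^ Poly_Mapping.lookup m i * a i ^ Poly_Mapping.lookup m' i)"
    by (simp add: lookup_add power_add)
  also have "\<dots> = monom_eval m a * monom_eval m' a"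
    by (simp add: prod.distrib monom_eval_superset[of ?S])
  finally show ?thesis .
qed

lemma mp_eval_monom_eval:
  "mp_eval f a = (\<Sum>m\<in>Poly_Mapping.keys f. Poly_Mapping.lookup f m * monom_eval m a)"
  by (simp add: mp_eval_def monom_eval_def)

lemma mp_eval_superset:
  assumes "finite S" "Poly_Mapping.keys f \<subseteq> S"
  shows "mp_eval f a = (\<Sum>m\<in>S. Poly_Mapping.lookup f m * monom_eval m a)"
  unfolding mp_eval_monom_eval
  by (rule sum.mono_neutral_left[OF assms]) (auto simp: in_keys_iff)

lemma mp_eval_single: "mp_eval (Poly_Mapping.single m c) a = c * monom_eval m a"
  by (subst mp_eval_superset[of "{m}"]) auto

lemma mp_eval_const [simp]: "mp_eval (mp_const c) a = c"
  by (simp add: mp_const_def mp_eval_single monom_eval_def)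

lemma mp_eval_zero [simp]: "mp_eval 0 a = 0"
  by (simp add: mp_eval_def)

lemma mp_eval_add: "mp_eval (f + g) a = mp_eval f a + mp_eval g a"
proof -
  let ?S = "Poly_Mapping.keys f \<union> Poly_Mapping.keys g"
  have "mp_eval (f + g) a = (\<Sum>m\<in>?S. Poly_Mapping.lookup (f + g) m * monom_eval m a)"
    by (rule mp_eval_superset) (auto simp: keys_add)
  also have "\<dots> = mp_eval f a + mp_eval g a"
    by (simp add: lookup_add distrib_right sum.distrib mp_eval_superset[of ?S])
  finally show ?thesis .
qed

lemma mp_eval_diff: "mp_eval (f - g) a = mp_eval f a - mp_eval g a"
  using mp_eval_add[of "f - g" g a] by (simp add: eq_diff_eq)

lemma mp_eval_sum: "mp_eval (sum f I) a = (\<Sum>i\<in>I. mp_eval (f i) a)"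
  by (induction I rule: infinite_finite_induct) (simp_all add: mp_eval_add)

lemma sum_single_lookup:
  "(\<Sum>m\<in>Poly_Mapping.keys f. Poly_Mapping.single m (Poly_Mapping.lookup f m)) = f"
  by (rule poly_mapping_eqI)
    (simp add: lookup_sum lookup_single when_def not_in_keys_iff_lookup_eq_zero)

lemma mp_eval_mult: "mp_eval (f * g) a = mp_eval f a * mp_eval g a"
proof -
  let ?t = "\<lambda>h m. Poly_Mapping.single m (Poly_Mapping.lookup h m)"
  have "f * g = (\<Sum>m\<in>Poly_Mapping.keys f. \<Sum>m'\<in>Poly_Mapping.keys g. ?t f m * ?t g m')"
    by (subst (1 2) sum_single_lookup[symmetric]) (simp add: sum_product)
  then have "mp_eval (f * g) a = (\<Sum>m\<in>Poly_Mapping.keys f. \<Sum>m'\<in>Poly_Mapping.keys g.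
      (Poly_Mapping.lookup f m * monom_eval m a) * (Poly_Mapping.lookup g m' * monom_eval m' a))"
    by (simp add: mp_eval_sum mult_single mp_eval_single monom_eval_add mult_ac)
  then show ?thesis
    by (simp add: mp_eval_monom_eval sum_product)
qed

lemma mp_eval_map_mult: "mp_eval (Poly_Mapping.map ((*) c) f) a = c * mp_eval f a"
proof -
  have "Poly_Mapping.map ((*) c) f = mp_const c * f"
    unfolding mp_const_def by (rule mult_map_scale_conv_mult)
  then show ?thesis by (simp add: mp_eval_mult)
qed

lemma vars_below_add: "vars_below n f \<Longrightarrow> vars_below n g \<Longrightarrow> vars_below n (f + g)"
  unfolding vars_below_def using keys_add[of f g] by blast

lemma vars_below_diff: "vars_below n f \<Longrightarrow> vars_below n g \<Longrightarrow> vars_below n (f - g)"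
  unfolding vars_below_def using keys_diff[of f g] by blast

lemma vars_below_mult:
  assumes "vars_below n f" "vars_below n g"
  shows "vars_below n (f * g)"
  unfolding vars_below_def
proof
  fix m assume "m \<in> Poly_Mapping.keys (f * g)"
  then obtain m1 m2 where "m = m1 + m2" "m1 \<in> Poly_Mapping.keys f" "m2 \<in> Poly_Mapping.keys g"
    using keys_mult[of f g] by blast
  then show "Poly_Mapping.keys m \<subseteq> {..<n}"
    using assms keys_add[of m1 m2] unfolding vars_below_def by blast
qed

lemma base_expansion_unique:
  fixes N :: nat
  assumes "\<forall>i<n. d i < N" "\<forall>i<n. e i < N"
    and "(\<Sum>i<n. d i * N ^ i) = (\<Sum>i<n. e i * N ^ i)"
  shows "\<forall>i<n. d i = e i"
  using assms
proof (induction n arbitrary: d e)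
  case 0
  then show ?case by simp
next
  case (Suc n)
  have expand: "(\<Sum>i<Suc n. f i * N ^ i) = f 0 + N * (\<Sum>i<n. f (Suc i) * N ^ i)"
    for f :: "nat \<Rightarrow> nat"
    by (subst sum.lessThan_Suc_shift) (simp add: sum_distrib_left mult_ac)
  have eq: "d 0 + N * (\<Sum>i<n. d (Suc i) * N ^ i) = e 0 + N * (\<Sum>i<n. e (Suc i) * N ^ i)"
    using Suc.prems(3) by (simp only: expand)
  have digits: "d 0 < N" "e 0 < N" using Suc.prems by auto
  then have "N > 0" by auto
  have lowest: "d 0 = e 0"
    using arg_cong[OF eq, of "\<lambda>x. x mod N"] digits by simp
  have higher: "(\<Sum>i<n. d (Suc i) * N ^ i) = (\<Sum>i<n. e (Suc i) * N ^ i)"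
    using eq lowest \<open>N > 0\<close> by simp
  have "\<forall>i<n. d (Suc i) = e (Suc i)"
    using Suc.IH[of "\<lambda>i. d (Suc i)" "\<lambda>i. e (Suc i)"] Suc.prems higher by auto
  then show ?case using lowest by (auto simp: less_Suc_eq_0_disj)
qed

lemma monom_eval_kronecker:
  assumes "Poly_Mapping.keys m \<subseteq> {..<n}"
  shows "monom_eval m (\<lambda>i. t ^ (N ^ i)) = t ^ (\<Sum>i<n. Poly_Mapping.lookup m i * N ^ i)"
proof -
  have "monom_eval m (\<lambda>i. t ^ (N ^ i)) = (\<Prod>i<n. (t ^ (N ^ i)) ^ Poly_Mapping.lookup m i)"
    using assms by (intro monom_eval_superset) auto
  also have "\<dots> = (\<Prod>i<n. t ^ (Poly_Mapping.lookup m i * N ^ i))"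
    by (simp add: power_mult[symmetric] mult.commute)
  finally show ?thesis
    by (simp add: power_sum)
qed

lemma inj_on_kronecker:
  fixes N :: nat
  assumes vars: "vars_below n f"
    and bound: "\<And>m i. m \<in> Poly_Mapping.keys f \<Longrightarrow> i < n \<Longrightarrow> Poly_Mapping.lookup m i < N"
  shows "inj_on (\<lambda>m. \<Sum>i<n. Poly_Mapping.lookup m i * N ^ i) (Poly_Mapping.keys f)"
proof (rule inj_onI)
  fix m m' assume m: "m \<in> Poly_Mapping.keys f" and m': "m' \<in> Poly_Mapping.keys f"
    and "(\<Sum>i<n. Poly_Mapping.lookup m i * N ^ i) = (\<Sum>i<n. Poly_Mapping.lookup m' i * N ^ i)"
  then have below_n: "\<forall>i<n. Poly_Mapping.lookup m i = Poly_Mapping.lookup m' i"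
    using bound by (intro base_expansion_unique[of n _ N]) auto
  have "Poly_Mapping.lookup m i = 0" "Poly_Mapping.lookup m' i = 0" if "\<not> i < n" for i
    using vars m m' that unfolding vars_below_def
    by (meson lessThan_iff not_in_keys_iff_lookup_eq_zero subsetD)+
  with below_n show "m = m'"
    by (intro poly_mapping_eqI) (metis)
qed

text \<open>Kronecker substitution \<open>x\<^sub>i \<mapsto> t ^ N ^ i\<close> with \<open>N\<close> larger than every exponent turns
  distinct monomials into distinct powers of \<open>t\<close>, reducing to the univariate case.\<close>
lemma mp_eval_all_0_imp_0:
  fixes f :: "'a::field mpoly"
  assumes inf: "infinite (UNIV::'a set)" and vars: "vars_below n f"
    and zero: "\<And>a. mp_eval f a = 0"
  shows "f = 0"
proof -
  define N where "N = Suc (\<Sum>m\<in>Poly_Mapping.keys f. \<Sum>i<n. Poly_Mapping.lookup m i)"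
  define enc where "enc m = (\<Sum>i<n. Poly_Mapping.lookup m i * N ^ i)" for m :: "nat \<Rightarrow>\<^sub>0 nat"
  have "Poly_Mapping.lookup m i < N" if "m \<in> Poly_Mapping.keys f" "i < n" for m i
  proof -
    have "Poly_Mapping.lookup m i \<le> (\<Sum>i<n. Poly_Mapping.lookup m i)"
      using that(2) by (intro member_le_sum) auto
    also have "\<dots> \<le> (\<Sum>m\<in>Poly_Mapping.keys f. \<Sum>i<n. Poly_Mapping.lookup m i)"
      using that(1) by (intro member_le_sum) auto
    finally show ?thesis unfolding N_def by simp
  qed
  then have inj: "inj_on enc (Poly_Mapping.keys f)"
    unfolding enc_def using inj_on_kronecker[OF vars] by blast
  define P where "P = (\<Sum>m\<in>Poly_Mapping.keys f. monom (Poly_Mapping.lookup f m) (enc m))"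
  have "poly P t = mp_eval f (\<lambda>i. t ^ (N ^ i))" for t
  proof -
    have "monom_eval m (\<lambda>i. t ^ (N ^ i)) = t ^ enc m" if "m \<in> Poly_Mapping.keys f" for m
      using vars that unfolding vars_below_def enc_def by (intro monom_eval_kronecker) auto
    then show ?thesis
      by (simp add: P_def poly_sum poly_monom mp_eval_monom_eval)
  qed
  with zero have "P = 0"
    using inf poly_roots_finite[of P] by auto
  have "Poly_Mapping.lookup f m = 0" if "m \<in> Poly_Mapping.keys f" for m
  proof -
    have "coeff P (enc m) =
        (\<Sum>m'\<in>Poly_Mapping.keys f. if m' = m then Poly_Mapping.lookup f m' else 0)"
      unfolding P_def coeff_sum coeff_monom using inj that by (intro sum.cong) (auto dest: inj_onD)
    with \<open>P = 0\<close> that show ?thesis by simp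
  qed
  then show "f = 0"
    by (intro poly_mapping_eqI) (metis lookup_zero not_in_keys_iff_lookup_eq_zero)
qed

lemma infinite_UNIV_alg_closed: "infinite (UNIV :: 'a::alg_closed_field set)"
proof
  assume fin: "finite (UNIV :: 'a set)"
  define P where "P = (\<Prod>x\<in>(UNIV::'a set). [:-x, 1:])"
  define q where "q = P + 1"
  have "degree P = card (UNIV::'a set)"
    unfolding P_def by (subst degree_prod_eq_sum_degree) auto
  moreover have "card (UNIV::'a set) > 0"
    using fin by (simp add: card_gt_0_iff)
  ultimately have "degree q > 0"
    unfolding q_def by (simp add: degree_add_eq_left)
  then obtain x where "poly q x = 0"
    using alg_closed_imp_poly_has_root by blast
  moreover have "poly P x = 0"
    unfolding P_def poly_prod by (rule prod_zero[OF fin]) auto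
  ultimately show False
    by (simp add: q_def)
qed

section \<open>Polynomial functions\<close>

inductive poly_fun :: "nat \<Rightarrow> ((nat \<Rightarrow> 'a::comm_ring_1) \<Rightarrow> 'a) \<Rightarrow> bool" for n where
  poly_fun_const: "poly_fun n (\<lambda>a. c)"
| poly_fun_var: "i < n \<Longrightarrow> poly_fun n (\<lambda>a. a i)"
| poly_fun_add: "poly_fun n f \<Longrightarrow> poly_fun n g \<Longrightarrow> poly_fun n (\<lambda>a. f a + g a)"
| poly_fun_mult: "poly_fun n f \<Longrightarrow> poly_fun n g \<Longrightarrow> poly_fun n (\<lambda>a. f a * g a)"

lemma poly_fun_sum: "(\<And>x. x \<in> X \<Longrightarrow> poly_fun n (f x)) \<Longrightarrow> poly_fun n (\<lambda>a. \<Sum>x\<in>X. f x a)"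
  by (induction X rule: infinite_finite_induct) (auto intro: poly_fun.intros)

lemma poly_fun_prod: "(\<And>x. x \<in> X \<Longrightarrow> poly_fun n (f x)) \<Longrightarrow> poly_fun n (\<lambda>a. \<Prod>x\<in>X. f x a)"
  by (induction X rule: infinite_finite_induct) (auto intro: poly_fun.intros)

lemma poly_fun_power: "poly_fun n f \<Longrightarrow> poly_fun n (\<lambda>a. f a ^ k)"
  by (induction k) (auto intro: poly_fun.intros)

lemma poly_fun_diff: "poly_fun n f \<Longrightarrow> poly_fun n g \<Longrightarrow> poly_fun n (\<lambda>a. f a - g a)"
  using poly_fun_add[of n f "\<lambda>a. -1 * g a"] poly_fun_mult[OF poly_fun_const[of n "-1"], of g]
  by simp

lemma poly_fun_compose:
  "poly_fun n f \<Longrightarrow> (\<And>i. i < n \<Longrightarrow> poly_fun n' (\<lambda>a. h a i)) \<Longrightarrow> poly_fun n' (\<lambda>a. f (h a))"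
  by (induction rule: poly_fun.induct) (auto intro: poly_fun.intros)

lemma poly_fun_cong_below: "poly_fun n f \<Longrightarrow> (\<And>i. i < n \<Longrightarrow> a i = b i) \<Longrightarrow> f a = f b"
  by (induction rule: poly_fun.induct) auto

lemma poly_fun_mp_eval:
  assumes "vars_below n f"
  shows "poly_fun n (mp_eval f)"
proof -
  have "poly_fun n (\<lambda>a. \<Sum>m\<in>Poly_Mapping.keys f. Poly_Mapping.lookup f m * monom_eval m a)"
    using assms unfolding monom_eval_def vars_below_def
    by (intro poly_fun_sum poly_fun_mult poly_fun_const poly_fun_prod poly_fun_power poly_fun_var) auto
  then show ?thesis by (simp add: mp_eval_monom_eval[abs_def])
qed

lemma vars_below_const: "vars_below n (mp_const c)"
  by (simp add: vars_below_def mp_const_def)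

lemma poly_fun_imp_mp_eval: "poly_fun n f \<Longrightarrow> \<exists>g. vars_below n g \<and> f = mp_eval g"
proof (induction rule: poly_fun.induct)
  case (poly_fun_const c)
  show ?case
    by (intro exI[of _ "mp_const c"]) (simp add: vars_below_const fun_eq_iff)
next
  case (poly_fun_var i)
  then show ?case
    by (intro exI[of _ "Poly_Mapping.single (Poly_Mapping.single i 1) 1"])
      (auto simp: vars_below_def mp_eval_single monom_eval_def fun_eq_iff)
next
  case (poly_fun_add f1 f2)
  then obtain g1 g2 where "vars_below n g1" "f1 = mp_eval g1" "vars_below n g2" "f2 = mp_eval g2"
    by blast
  then show ?case
    by (intro exI[of _ "g1 + g2"]) (simp add: vars_below_add mp_eval_add fun_eq_iff)
next
  case (poly_fun_mult f1 f2)
  then obtain g1 g2 where "vars_below n g1" "f1 = mp_eval g1" "vars_below n g2" "f2 = mp_eval g2"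
    by blast
  then show ?case
    by (intro exI[of _ "g1 * g2"]) (simp add: vars_below_mult mp_eval_mult fun_eq_iff)
qed

lemma poly_fun_univariate: "poly_fun n f \<Longrightarrow> \<exists>q. \<forall>t. f (a(i := t)) = poly q t"
proof (induction rule: poly_fun.induct)
  case (poly_fun_const c)
  show ?case by (intro exI[of _ "[:c:]"]) simp
next
  case (poly_fun_var j)
  show ?case
    by (cases "j = i") (auto intro: exI[of _ "[:0, 1:]"] exI[of _ "[:a j:]"])
next
  case (poly_fun_add f g)
  then obtain p q where "\<forall>t. f (a(i := t)) = poly p t" "\<forall>t. g (a(i := t)) = poly q t" by blast
  then show ?case by (intro exI[of _ "p + q"]) (simp add: fun_upd_def)
next
  case (poly_fun_mult f g)
  then obtain p q where "\<forall>t. f (a(i := t)) = poly p t" "\<forall>t. g (a(i := t)) = poly q t" by blast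
  then show ?case by (intro exI[of _ "p * q"]) (simp add: fun_upd_def)
qed

lemma poly_fun_eq_0_if_cofinite:
  fixes f :: "(nat \<Rightarrow> 'a::field) \<Rightarrow> 'a"
  assumes inf: "infinite (UNIV::'a set)" and f: "poly_fun n f" and "finite X"
    and zero: "\<And>t. t \<notin> X \<Longrightarrow> f (a(i := t)) = 0"
  shows "f a = 0"
proof -
  obtain q where q: "\<forall>t. f (a(i := t)) = poly q t"
    using poly_fun_univariate[OF f] by blast
  have "UNIV - X \<subseteq> {t. poly q t = 0}"
    using zero q by auto
  moreover have "infinite (UNIV - X)"
    using inf \<open>finite X\<close> by simp
  ultimately have "q = 0"
    using poly_roots_finite[of q] finite_subset by blast
  then show ?thesis
    using q[rule_format, of "a i"] by simp
qed

text \<open>Varying the coordinates in \<open>R\<close> one at a time, each avoiding the finitely many values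
  already taken, reaches an injective point; a polynomial vanishing there vanishes identically
  in that coordinate.\<close>
lemma poly_fun_eq_0_if_eq_0_on_inj_extensions:
  fixes g :: "(nat \<Rightarrow> 'a::field) \<Rightarrow> 'a"
  assumes inf: "infinite (UNIV::'a set)" and g: "poly_fun n g" and "finite R"
    and "inj_on b ({..<n} - R)"
    and "\<And>a. (\<And>i. i \<notin> R \<Longrightarrow> a i = b i) \<Longrightarrow> inj_on a {..<n} \<Longrightarrow> g a = 0"
  shows "g b = 0"
  using \<open>finite R\<close> assms(4,5)
proof (induction R arbitrary: b rule: finite_induct)
  case empty
  then show ?case by simp
next
  case (insert r R)
  let ?X = "b ` ({..<n} - insert r R)"
  have "g (b(r := t)) = 0" if t: "t \<notin> ?X" for t
  proof (rule insert.IH)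
    have "inj_on (b(r := t)) ({..<n} - insert r R)"
      using insert.prems(1) t by (intro inj_on_fun_updI) (auto intro: inj_on_subset)
    then have "inj_on (b(r := t)) (insert r ({..<n} - insert r R))"
      using t by auto
    then show "inj_on (b(r := t)) ({..<n} - R)"
      by (rule inj_on_subset) auto
    show "g a = 0" if "\<And>i. i \<notin> R \<Longrightarrow> a i = (b(r := t)) i" "inj_on a {..<n}" for a
      using that by (intro insert.prems(2)) auto
  qed
  then show ?case
    using poly_fun_eq_0_if_cofinite[OF inf g, of ?X b r] by simp
qed

lemma poly_fun_eq_0_if_eq_0_on_inj:
  fixes g :: "(nat \<Rightarrow> 'a::field) \<Rightarrow> 'a"
  assumes "infinite (UNIV::'a set)" "poly_fun n g" "\<And>a. inj_on a {..<n} \<Longrightarrow> g a = 0"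
  shows "g a = 0"
  using poly_fun_eq_0_if_eq_0_on_inj_extensions[of n g "{..<n}" a] assms by simp

lemma poly_fun_subst_var:
  assumes "poly_fun n f" "j < n"
  shows "poly_fun n (\<lambda>a. f (a(i := a j)))"
proof (rule poly_fun_compose[OF assms(1)])
  fix m assume "m < n"
  with assms(2) show "poly_fun n (\<lambda>a. (a(i := a j)) m)"
    by (cases "m = i") (auto intro: poly_fun_var)
qed

lemma poly_fun_diff_subst_var:
  assumes "poly_fun n f" "j < n"
  shows "\<exists>q. poly_fun n q \<and> (\<forall>a. f a - f (a(i := a j)) = (a i - a j) * q a)"
  using assms(1)
proof (induction rule: poly_fun.induct)
  case (poly_fun_const c)
  show ?case by (intro exI[of _ "\<lambda>a. 0"]) (auto intro: poly_fun.intros)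
next
  case (poly_fun_var m)
  show ?case
  proof (cases "m = i")
    case True
    then show ?thesis by (intro exI[of _ "\<lambda>a. 1"]) (auto intro: poly_fun.intros)
  next
    case False
    then show ?thesis by (intro exI[of _ "\<lambda>a. 0"]) (auto intro: poly_fun.intros)
  qed
next
  case (poly_fun_add f g)
  then obtain q1 q2 where q: "poly_fun n q1" "\<forall>a. f a - f (a(i := a j)) = (a i - a j) * q1 a"
    "poly_fun n q2" "\<forall>a. g a - g (a(i := a j)) = (a i - a j) * q2 a" by blast
  show ?case
  proof (intro exI[of _ "\<lambda>a. q1 a + q2 a"] conjI allI)
    show "poly_fun n (\<lambda>a. q1 a + q2 a)" using q by (auto intro: poly_fun.intros)
    fix a
    have "f a + g a - (f (a(i := a j)) + g (a(i := a j))) =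
      (f a - f (a(i := a j))) + (g a - g (a(i := a j)))"
      by (simp add: algebra_simps)
    then show "f a + g a - (f (a(i := a j)) + g (a(i := a j))) = (a i - a j) * (q1 a + q2 a)"
      using q by (simp add: distrib_left)
  qed
next
  case (poly_fun_mult f g)
  then obtain q1 q2 where q: "poly_fun n q1" "\<forall>a. f a - f (a(i := a j)) = (a i - a j) * q1 a"
    "poly_fun n q2" "\<forall>a. g a - g (a(i := a j)) = (a i - a j) * q2 a" by blast
  show ?case
  proof (intro exI[of _ "\<lambda>a. q1 a * g a + f (a(i := a j)) * q2 a"] conjI allI)
    show "poly_fun n (\<lambda>a. q1 a * g a + f (a(i := a j)) * q2 a)"
      using poly_fun_mult q assms(2) by (intro poly_fun.intros poly_fun_subst_var)
    fix a
    have "f a * g a - f (a(i := a j)) * g (a(i := a j)) =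
      (f a - f (a(i := a j))) * g a + f (a(i := a j)) * (g a - g (a(i := a j)))"
      by (simp add: algebra_simps)
    also have "\<dots> = (a i - a j) * (q1 a * g a + f (a(i := a j)) * q2 a)"
      using q by (simp add: distrib_left mult_ac)
    finally show "f a * g a - f (a(i := a j)) * g (a(i := a j)) =
        (a i - a j) * (q1 a * g a + f (a(i := a j)) * q2 a)" .
  qed
qed

lemma poly_fun_cofactor_vanishes:
  fixes q :: "(nat \<Rightarrow> 'a::field) \<Rightarrow> 'a"
  assumes inf: "infinite (UNIV::'a set)" and q: "poly_fun n q"
    and factor: "\<And>a. P a = (a i - a j) * q a" and "i \<noteq> j" and "{k, l} \<noteq> {i, j}"
    and vanish: "\<And>a. a k = a l \<Longrightarrow> P a = 0" and "a k = a l"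
  shows "q a = 0"
proof (cases "i \<in> {k, l}")
  case False
  show ?thesis
  proof (rule poly_fun_eq_0_if_cofinite[OF inf q, of "{a j}" a i])
    fix t assume "t \<notin> {a j}"
    moreover have "P (a(i := t)) = 0"
      using False \<open>a k = a l\<close> by (intro vanish) auto
    ultimately show "q (a(i := t)) = 0"
      using factor[of "a(i := t)"] \<open>i \<noteq> j\<close> by simp
  qed simp
next
  case True
  with assms(4,5) have "j \<notin> {k, l}" by auto
  show ?thesis
  proof (rule poly_fun_eq_0_if_cofinite[OF inf q, of "{a i}" a j])
    fix t assume "t \<notin> {a i}"
    moreover have "P (a(j := t)) = 0"
      using \<open>j \<notin> {k, l}\<close> \<open>a k = a l\<close> by (intro vanish) auto
    ultimately show "q (a(j := t)) = 0"
      using factor[of "a(j := t)"] \<open>i \<noteq> j\<close> by simp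
  qed simp
qed

lemma poly_fun_divisible_by_prod_diffs:
  fixes P :: "(nat \<Rightarrow> 'a::field) \<Rightarrow> 'a"
  assumes inf: "infinite (UNIV::'a set)" and "finite X" and "poly_fun n P"
    and below: "\<And>x. x \<in> X \<Longrightarrow> u x < n \<and> v x < n \<and> u x \<noteq> v x"
    and distinct: "\<And>x y. x \<in> X \<Longrightarrow> y \<in> X \<Longrightarrow> x \<noteq> y \<Longrightarrow> {u x, v x} \<noteq> {u y, v y}"
    and vanish: "\<And>x a. x \<in> X \<Longrightarrow> a (u x) = a (v x) \<Longrightarrow> P a = 0"
  shows "\<exists>Q. poly_fun n Q \<and> (\<forall>a. P a = Q a * (\<Prod>x\<in>X. a (u x) - a (v x)))"
  using \<open>finite X\<close> assms(3-6)
proof (induction X arbitrary: P rule: finite_induct)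
  case empty
  then show ?case by (intro exI[of _ P]) simp
next
  case (insert x X)
  have x: "u x < n" "v x < n" "u x \<noteq> v x" using insert.prems(2) by auto
  obtain q where "poly_fun n q"
    and q: "\<forall>a. P a - P (a(u x := a (v x))) = (a (u x) - a (v x)) * q a"
    using poly_fun_diff_subst_var[OF insert.prems(1) x(2)] by blast
  have factor: "P a = (a (u x) - a (v x)) * q a" for a
  proof -
    have "P (a(u x := a (v x))) = 0"
      using insert.prems(4)[of x "a(u x := a (v x))"] x(3) by (simp add: fun_upd_def)
    with q[rule_format, of a] show ?thesis by simp
  qed
  have "q a = 0" if "y \<in> X" "a (u y) = a (v y)" for y a
  proof (rule poly_fun_cofactor_vanishes[OF inf \<open>poly_fun n q\<close> factor x(3)])
    show "{u y, v y} \<noteq> {u x, v x}"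
      using insert.hyps(2) insert.prems(3) that(1) by blast
  qed (use insert.prems(4) that in auto)
  moreover have "u y < n \<and> v y < n \<and> u y \<noteq> v y" if "y \<in> X" for y
    using insert.prems(2) that by simp
  moreover have "{u y, v y} \<noteq> {u z, v z}" if "y \<in> X" "z \<in> X" "y \<noteq> z" for y z
    using insert.prems(3) that by simp
  ultimately obtain Q where "poly_fun n Q" "\<forall>a. q a = Q a * (\<Prod>x\<in>X. a (u x) - a (v x))"
    using insert.IH[OF \<open>poly_fun n q\<close>] by blast
  then show ?case
    by (intro exI[of _ Q]) (simp add: factor insert.hyps mult_ac)
qed

lemma permutes_lessThan_iff: "\<sigma> permutes {..<n} \<Longrightarrow> \<sigma> x < n \<longleftrightarrow> x < (n::nat)"
  using permutes_in_image[of \<sigma> "{..<n}" x] by simp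

lemma inj_on_permute:
  fixes n :: nat
  assumes a: "inj_on a {..<n}" and \<pi>: "\<pi> permutes {..<n}"
  shows "inj_on (\<lambda>i. a (\<pi> i)) {..<n}"
proof (rule inj_onI)
  fix x y assume "x \<in> {..<n}" "y \<in> {..<n}" "a (\<pi> x) = a (\<pi> y)"
  then have "\<pi> x = \<pi> y"
    using a permutes_lessThan_iff[OF \<pi>] by (auto dest: inj_onD)
  then show "x = y"
    using permutes_inj[OF \<pi>] by (auto dest: injD)
qed

lemma poly_fun_permute:
  assumes "poly_fun n f" "\<pi> permutes {..<n}"
  shows "poly_fun n (\<lambda>a. f (\<lambda>i. a (\<pi> i)))"
  by (rule poly_fun_compose[OF assms(1)])
    (use permutes_lessThan_iff[OF assms(2)] in \<open>auto intro: poly_fun_var\<close>)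

text \<open>The monomial \<open>m\<close> goes to \<open>m \<circ> inv \<sigma>\<close>, so \<open>x\<^sub>i\<close> is replaced by \<open>x\<^sub>\<sigma>\<^sub>i\<close>.\<close>
definition mp_permute :: "(nat \<Rightarrow> nat) \<Rightarrow> 'a::comm_ring_1 mpoly \<Rightarrow> 'a mpoly" where
  "mp_permute \<sigma> f = (\<Sum>m\<in>Poly_Mapping.keys f.
     Poly_Mapping.single (Poly_Mapping.map_key (inv \<sigma>) m) (Poly_Mapping.lookup f m))"

lemma lookup_map_key_permutes:
  "\<sigma> permutes S \<Longrightarrow> Poly_Mapping.lookup (Poly_Mapping.map_key \<sigma> m) i = Poly_Mapping.lookup m (\<sigma> i)"
  by (simp add: map_key.rep_eq permutes_inj)

lemma map_key_inv_permutes: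
  assumes "\<sigma> permutes S"
  shows "Poly_Mapping.map_key (inv \<sigma>) m = m' \<longleftrightarrow> m = Poly_Mapping.map_key \<sigma> m'"
proof -
  have inj: "inj \<sigma>" "inj (inv \<sigma>)"
    using permutes_inj[OF assms] permutes_inj[OF permutes_inv[OF assms]] .
  have "Poly_Mapping.map_key \<sigma> (Poly_Mapping.map_key (inv \<sigma>) p) = p"
    "Poly_Mapping.map_key (inv \<sigma>) (Poly_Mapping.map_key \<sigma> p) = p" for p :: "'a \<Rightarrow>\<^sub>0 'b::zero"
    by (simp_all add: map_key_compose inj permutes_inv_o[OF assms] map_key_id[unfolded id_def[symmetric]])
  then show ?thesis by metis
qed

lemma keys_map_key_permutes:
  assumes "\<sigma> permutes {..<n}" "Poly_Mapping.keys m \<subseteq> {..<n}"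
  shows "Poly_Mapping.keys (Poly_Mapping.map_key (inv \<sigma>) m) \<subseteq> {..<n}"
proof
  fix i assume "i \<in> Poly_Mapping.keys (Poly_Mapping.map_key (inv \<sigma>) m)"
  then have "inv \<sigma> i \<in> Poly_Mapping.keys m"
    by (simp add: in_keys_iff lookup_map_key_permutes[OF permutes_inv[OF assms(1)]])
  then have "inv \<sigma> i < n"
    using assms(2) by auto
  then show "i \<in> {..<n}"
    using permutes_inverses(1)[OF assms(1)] permutes_in_image[OF assms(1), of "inv \<sigma> i"] by auto
qed

lemma lookup_mp_permute:
  assumes "\<sigma> permutes S"
  shows "Poly_Mapping.lookup (mp_permute \<sigma> f) m = Poly_Mapping.lookup f (Poly_Mapping.map_key \<sigma> m)"
  unfolding mp_permute_def lookup_sum lookup_single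
  by (simp add: when_def map_key_inv_permutes[OF assms] not_in_keys_iff_lookup_eq_zero)

lemma vars_below_mp_permute:
  assumes "\<sigma> permutes {..<n}" "vars_below n f"
  shows "vars_below n (mp_permute \<sigma> f)"
  unfolding vars_below_def
proof
  fix m assume "m \<in> Poly_Mapping.keys (mp_permute \<sigma> f)"
  then have "m \<in> (\<Union>u\<in>Poly_Mapping.keys f. Poly_Mapping.keys
      (Poly_Mapping.single (Poly_Mapping.map_key (inv \<sigma>) u) (Poly_Mapping.lookup f u)))"
    unfolding mp_permute_def by (rule subsetD[OF keys_sum])
  then obtain u where "u \<in> Poly_Mapping.keys f" "m = Poly_Mapping.map_key (inv \<sigma>) u"
    by (auto split: if_splits)
  then show "Poly_Mapping.keys m \<subseteq> {..<n}"
    using assms keys_map_key_permutes unfolding vars_below_def by blast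
qed

lemma mp_eval_mp_permute:
  assumes \<sigma>: "\<sigma> permutes {..<n}" and "vars_below n f"
  shows "mp_eval (mp_permute \<sigma> f) a = mp_eval f (\<lambda>i. a (\<sigma> i))"
proof -
  have monom: "monom_eval (Poly_Mapping.map_key (inv \<sigma>) m) a = monom_eval m (\<lambda>i. a (\<sigma> i))"
    if "m \<in> Poly_Mapping.keys f" for m
  proof -
    have m: "Poly_Mapping.keys m \<subseteq> {..<n}"
      using \<open>vars_below n f\<close> that unfolding vars_below_def by auto
    have "monom_eval (Poly_Mapping.map_key (inv \<sigma>) m) a
        = (\<Prod>i<n. a i ^ Poly_Mapping.lookup m (inv \<sigma> i))"
      using keys_map_key_permutes[OF \<sigma> m]
      by (simp add: monom_eval_superset[of "{..<n}"] lookup_map_key_permutes[OF permutes_inv[OF \<sigma>]])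
    also have "\<dots> = (\<Prod>j<n. a (\<sigma> j) ^ Poly_Mapping.lookup m j)"
      using prod.permute[OF \<sigma>, of "\<lambda>i. a i ^ Poly_Mapping.lookup m (inv \<sigma> i)"]
      by (simp add: permutes_inverses[OF \<sigma>])
    also have "\<dots> = monom_eval m (\<lambda>i. a (\<sigma> i))"
      using m by (simp add: monom_eval_superset[of "{..<n}"])
    finally show ?thesis .
  qed
  have "mp_eval (mp_permute \<sigma> f) a = (\<Sum>m\<in>Poly_Mapping.keys f.
      Poly_Mapping.lookup f m * monom_eval (Poly_Mapping.map_key (inv \<sigma>) m) a)"
    by (simp add: mp_permute_def mp_eval_sum mp_eval_single)
  also have "\<dots> = mp_eval f (\<lambda>i. a (\<sigma> i))"
    unfolding mp_eval_monom_eval by (intro sum.cong) (simp_all add: monom)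
  finally show ?thesis .
qed

lemma Wk_vars_below: "f \<in> Wk n \<Longrightarrow> vars_below n f"
  unfolding Wk_def vars_below_def by blast

lemma mp_permute_Wk:
  assumes "f \<in> Wk n" "\<sigma> permutes {..<n}"
  shows "mp_permute \<sigma> f = f"
proof (rule poly_mapping_eqI)
  fix m :: "nat \<Rightarrow>\<^sub>0 nat"
  have "\<forall>i. Poly_Mapping.lookup m (\<sigma> i) = Poly_Mapping.lookup (Poly_Mapping.map_key \<sigma> m) i"
    by (simp add: lookup_map_key_permutes[OF assms(2)])
  then have "Poly_Mapping.lookup f m = Poly_Mapping.lookup f (Poly_Mapping.map_key \<sigma> m)"
    using assms unfolding Wk_def by blast
  then show "Poly_Mapping.lookup (mp_permute \<sigma> f) m = Poly_Mapping.lookup f m"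
    by (simp add: lookup_mp_permute[OF assms(2)])
qed

lemma mp_eval_Wk_permute:
  assumes "f \<in> Wk n" "\<sigma> permutes {..<n}"
  shows "mp_eval f (\<lambda>i. a (\<sigma> i)) = mp_eval f a"
  using mp_eval_mp_permute[OF assms(2) Wk_vars_below[OF assms(1)]] mp_permute_Wk[OF assms] by simp

lemma mp_eval_Wk_bij:
  assumes f: "f \<in> Wk n" and u: "bij_betw u {..<n} {..<n}"
  shows "mp_eval f (\<lambda>i. a (u i)) = mp_eval f a"
proof -
  define \<sigma> where "\<sigma> i = (if i < n then u i else i)" for i
  have "bij_betw \<sigma> {..<n} {..<n}"
    using u by (rule bij_betw_cong[THEN iffD1, rotated]) (simp add: \<sigma>_def)
  then have "\<sigma> permutes {..<n}"
    by (rule bij_imp_permutes) (simp add: \<sigma>_def)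
  have "mp_eval f (\<lambda>i. a (u i)) = mp_eval f (\<lambda>i. a (\<sigma> i))"
    by (rule poly_fun_cong_below[OF poly_fun_mp_eval[OF Wk_vars_below[OF f]]]) (simp add: \<sigma>_def)
  also have "\<dots> = mp_eval f a"
    by (rule mp_eval_Wk_permute[OF f \<open>\<sigma> permutes {..<n}\<close>])
  finally show ?thesis .
qed

lemma Wk_if_eval_symmetric:
  fixes f :: "'a::field mpoly"
  assumes inf: "infinite (UNIV::'a set)" and "vars_below n f"
    and sym: "\<And>\<sigma> a. \<sigma> permutes {..<n} \<Longrightarrow> mp_eval f (\<lambda>i. a (\<sigma> i)) = mp_eval f a"
  shows "f \<in> Wk n"
  unfolding Wk_def
proof (intro CollectI conjI allI impI)
  show "\<forall>m\<in>Poly_Mapping.keys f. Poly_Mapping.keys m \<subseteq> {..<n}"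
    using \<open>vars_below n f\<close> unfolding vars_below_def .
  fix \<sigma> and m m' :: "nat \<Rightarrow>\<^sub>0 nat"
  assume \<sigma>: "\<sigma> permutes {..<n}" and "\<forall>i. Poly_Mapping.lookup m' (\<sigma> i) = Poly_Mapping.lookup m i"
  then have m: "m = Poly_Mapping.map_key \<sigma> m'"
    by (intro poly_mapping_eqI) (simp add: lookup_map_key_permutes)
  have "mp_permute \<sigma> f - f = 0"
    using \<open>vars_below n f\<close> \<sigma>
    by (intro mp_eval_all_0_imp_0[OF inf, of n])
      (simp_all add: vars_below_diff vars_below_mp_permute mp_eval_diff mp_eval_mp_permute sym)
  then show "Poly_Mapping.lookup f m' = Poly_Mapping.lookup f m"
    using lookup_mp_permute[OF \<sigma>, of f m'] m by simp
qed

lemma poly_fun_symmetric_imp_Wk: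
  fixes g :: "(nat \<Rightarrow> 'a::field) \<Rightarrow> 'a"
  assumes "infinite (UNIV::'a set)" "poly_fun n g"
    and "\<And>\<sigma> a. \<sigma> permutes {..<n} \<Longrightarrow> g (\<lambda>i. a (\<sigma> i)) = g a"
  shows "\<exists>f\<in>Wk n. mp_eval f = g"
proof -
  obtain f where f: "vars_below n f" "g = mp_eval f"
    using poly_fun_imp_mp_eval[OF assms(2)] by blast
  with assms have "f \<in> Wk n"
    by (intro Wk_if_eval_symmetric) auto
  with f show ?thesis by blast
qed

lemma mp_eq_if_eval_eq_on_inj:
  fixes f :: "'a::field mpoly"
  assumes inf: "infinite (UNIV::'a set)" and "vars_below n f" "vars_below n g"
    and eq: "\<And>a. inj_on a {..<n} \<Longrightarrow> mp_eval f a = mp_eval g a"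
  shows "f = g"
proof -
  have "vars_below n (f - g)"
    using assms by (simp add: vars_below_diff)
  moreover have "mp_eval (f - g) a = 0" for a
  proof (rule poly_fun_eq_0_if_eq_0_on_inj[OF inf poly_fun_mp_eval])
    show "vars_below n (f - g)" by fact
    show "mp_eval (f - g) b = 0" if "inj_on b {..<n}" for b
      using eq[OF that] by (simp add: mp_eval_diff)
  qed
  ultimately have "f - g = 0"
    by (rule mp_eval_all_0_imp_0[OF inf])
  then show ?thesis by simp
qed

lemma Wk_if_le_1:
  assumes "n \<le> 1" "vars_below n f"
  shows "f \<in> Wk n"
  unfolding Wk_def
proof (intro CollectI conjI allI impI)
  show "\<forall>m\<in>Poly_Mapping.keys f. Poly_Mapping.keys m \<subseteq> {..<n}"
    using assms(2) by (simp add: vars_below_def)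
  fix \<sigma> and m m' :: "nat \<Rightarrow>\<^sub>0 nat"
  assume \<sigma>: "\<sigma> permutes {..<n}" and m: "\<forall>i. Poly_Mapping.lookup m' (\<sigma> i) = Poly_Mapping.lookup m i"
  have "\<sigma> i = i" for i
  proof (cases "i < n")
    case True
    then show ?thesis using permutes_in_image[OF \<sigma>, of i] assms(1) by simp
  qed (use permutes_not_in[OF \<sigma>, of i] in simp)
  with m have "m' = m" by (intro poly_mapping_eqI) simp
  then show "Poly_Mapping.lookup f m' = Poly_Mapping.lookup f m" by simp
qed

lemma zero_Wk: "0 \<in> Wk n"
  by (simp add: Wk_def)

lemma add_Wk:
  assumes "f \<in> Wk n" "g \<in> Wk n"
  shows "f + g \<in> Wk n"
  unfolding Wk_def
proof (intro CollectI conjI allI impI ballI)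
  fix m assume "m \<in> Poly_Mapping.keys (f + g)"
  then have "m \<in> Poly_Mapping.keys f \<union> Poly_Mapping.keys g" using keys_add[of f g] by blast
  then show "Poly_Mapping.keys m \<subseteq> {..<n}" using assms unfolding Wk_def by blast
next
  fix \<sigma> and m m' :: "nat \<Rightarrow>\<^sub>0 nat"
  assume "\<sigma> permutes {..<n}" "\<forall>i. Poly_Mapping.lookup m' (\<sigma> i) = Poly_Mapping.lookup m i"
  then have "Poly_Mapping.lookup f m' = Poly_Mapping.lookup f m"
    "Poly_Mapping.lookup g m' = Poly_Mapping.lookup g m"
    using assms unfolding Wk_def by blast+
  then show "Poly_Mapping.lookup (f + g) m' = Poly_Mapping.lookup (f + g) m"
    by (simp add: lookup_add)
qed

lemma lookup_map_mult:
  "Poly_Mapping.lookup (Poly_Mapping.map ((*) (c::'a::comm_ring_1)) f) m = c * Poly_Mapping.lookup f m"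
  by (simp add: map.rep_eq when_def)

lemma map_mult_Wk:
  assumes "f \<in> Wk n"
  shows "Poly_Mapping.map ((*) c) f \<in> Wk n"
  unfolding Wk_def
proof (intro CollectI conjI allI impI ballI)
  fix m assume "m \<in> Poly_Mapping.keys (Poly_Mapping.map ((*) c) f)"
  then have "m \<in> Poly_Mapping.keys f" by (auto simp: in_keys_iff lookup_map_mult)
  then show "Poly_Mapping.keys m \<subseteq> {..<n}" using assms unfolding Wk_def by blast
next
  fix \<sigma> and m m' :: "nat \<Rightarrow>\<^sub>0 nat"
  assume "\<sigma> permutes {..<n}" "\<forall>i. Poly_Mapping.lookup m' (\<sigma> i) = Poly_Mapping.lookup m i"
  then have "Poly_Mapping.lookup f m' = Poly_Mapping.lookup f m"
    using assms unfolding Wk_def by blast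
  then show "Poly_Mapping.lookup (Poly_Mapping.map ((*) c) f) m' =
      Poly_Mapping.lookup (Poly_Mapping.map ((*) c) f) m"
    by (simp add: lookup_map_mult)
qed

lemma permutes_image_upper_block:
  fixes k l :: nat
  assumes "\<sigma> permutes {..<k+l}"
  shows "\<sigma> ` {k..<k+l} = {..<k+l} - \<sigma> ` {..<k}"
proof -
  have "{k..<k+l} = {..<k+l} - {..<k}" by auto
  then have "\<sigma> ` {k..<k+l} = \<sigma> ` ({..<k+l} - {..<k})" by simp
  also have "\<dots> = \<sigma> ` {..<k+l} - \<sigma> ` {..<k}"
    by (rule image_set_diff[OF permutes_inj[OF assms]])
  finally show ?thesis using permutes_image[OF assms] by simp
qed

lemma bij_betw_add_nat: "bij_betw (\<lambda>i. i + k) {..<l} {k..<k+l::nat}"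
  by (rule bij_betwI[where g = "\<lambda>i. i - k"]) auto

lemma bij_betw_diff_nat: "bij_betw (\<lambda>i. i - k) {k..<k+l} {..<l::nat}"
  by (rule bij_betwI[where g = "\<lambda>i. i + k"]) auto

lemma strict_mono_on_eq_if_image_eq:
  fixes f g :: "nat \<Rightarrow> nat"
  assumes f: "strict_mono_on {a..<b} f" and g: "strict_mono_on {a..<b} g"
    and "f ` {a..<b} = g ` {a..<b}" and "i \<in> {a..<b}"
  shows "f i = g i"
proof -
  have "sorted_wrt (<) (map f [a..<b])"
    by (rule sorted_wrt_map_mono[OF sorted_wrt_upt], rule strict_mono_onD[OF f]) auto
  moreover have "sorted_wrt (<) (map g [a..<b])"
    by (rule sorted_wrt_map_mono[OF sorted_wrt_upt], rule strict_mono_onD[OF g]) auto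
  ultimately have "map g [a..<b] = map f [a..<b]"
    by (rule strict_sorted_equal) (use assms(3) in simp)
  then show ?thesis using assms(4) by (simp add: map_eq_conv)
qed

lemma shuffles_permutes: "\<sigma> \<in> shuffles k l \<Longrightarrow> \<sigma> permutes {..<k+l}"
  by (simp add: shuffles_def)

lemma shuffle_eqI:
  assumes \<sigma>: "\<sigma> \<in> shuffles k l" and \<tau>: "\<tau> \<in> shuffles k l" and eq: "\<sigma> ` {..<k} = \<tau> ` {..<k}"
  shows "\<sigma> = \<tau>"
proof
  fix x
  have perm: "\<sigma> permutes {..<k+l}" "\<tau> permutes {..<k+l}"
    using \<sigma> \<tau> by (simp_all add: shuffles_def)
  have mono: "strict_mono_on {0..<k} \<sigma>" "strict_mono_on {0..<k} \<tau>"
    "strict_mono_on {k..<k+l} \<sigma>" "strict_mono_on {k..<k+l} \<tau>"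
    using \<sigma> \<tau> by (simp_all add: shuffles_def atLeast0LessThan)
  have "\<sigma> ` {k..<k+l} = \<tau> ` {k..<k+l}"
    using eq by (simp add: permutes_image_upper_block[OF perm(1)] permutes_image_upper_block[OF perm(2)])
  then consider "x < k" | "x \<in> {k..<k+l}" | "x \<notin> {..<k+l}"
    by fastforce
  then show "\<sigma> x = \<tau> x"
  proof cases
    case 1
    then show ?thesis
      using strict_mono_on_eq_if_image_eq[OF mono(1,2)] eq by (simp add: atLeast0LessThan)
  next
    case 2
    with \<open>\<sigma> ` {k..<k+l} = \<tau> ` {k..<k+l}\<close> show ?thesis
      using strict_mono_on_eq_if_image_eq[OF mono(3,4)] by simp
  next
    case 3
    then show ?thesis using permutes_not_in[OF perm(1)] permutes_not_in[OF perm(2)] by simp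
  qed
qed

text \<open>Enumerate \<open>B\<close> and its complement in increasing order.\<close>
lemma shuffle_with_image:
  fixes k l :: nat
  assumes B: "B \<subseteq> {..<k+l}" "card B = k"
  obtains \<sigma> where "\<sigma> \<in> shuffles k l" "\<sigma> ` {..<k} = B"
proof -
  define C where "C = {..<k+l} - B"
  have "finite B" "finite C" using B(1) finite_subset by (auto simp: C_def)
  have "card C = l" using B \<open>finite B\<close> by (simp add: C_def card_Diff_subset)
  obtain h1 where h1: "bij_betw h1 {..<k} B" "strict_mono_on {..<k} h1"
    using ex_bij_betw_strict_mono_card[OF \<open>finite B\<close>] B(2) by metis
  obtain h2 where h2: "bij_betw h2 {..<l} C" "strict_mono_on {..<l} h2"
    using ex_bij_betw_strict_mono_card[OF \<open>finite C\<close>] \<open>card C = l\<close> by metis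
  define \<sigma> where "\<sigma> i = (if i < k then h1 i else if i < k + l then h2 (i - k) else i)" for i
  have lower: "bij_betw \<sigma> {..<k} B"
    using h1(1) by (rule bij_betw_cong[THEN iffD1, rotated]) (simp add: \<sigma>_def)
  have "bij_betw (h2 \<circ> (\<lambda>i. i - k)) {k..<k+l} C"
    by (rule bij_betw_trans[OF bij_betw_diff_nat h2(1)])
  then have upper: "bij_betw \<sigma> {k..<k+l} C"
    by (rule bij_betw_cong[THEN iffD1, rotated]) (simp add: \<sigma>_def)
  have "bij_betw \<sigma> ({..<k} \<union> {k..<k+l}) (B \<union> C)"
    by (rule bij_betw_combine[OF lower upper]) (auto simp: C_def)
  moreover have "{..<k} \<union> {k..<k+l} = {..<k+l}" "B \<union> C = {..<k+l}"
    using B(1) by (auto simp: C_def)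
  ultimately have "\<sigma> permutes {..<k+l}"
    by (intro bij_imp_permutes) (simp_all add: \<sigma>_def)
  moreover have "strict_mono_on {..<k} \<sigma>"
    using h1(2) by (auto simp: \<sigma>_def strict_mono_on_def)
  moreover have "strict_mono_on {k..<k+l} \<sigma>"
  proof (rule strict_mono_onI)
    fix r s assume "r \<in> {k..<k+l}" "s \<in> {k..<k+l}" "r < s"
    then show "\<sigma> r < \<sigma> s"
      using strict_mono_onD[OF h2(2), of "r - k" "s - k"] by (simp add: \<sigma>_def)
  qed
  ultimately have "\<sigma> \<in> shuffles k l"
    by (simp add: shuffles_def)
  moreover have "\<sigma> ` {..<k} = B"
    using lower by (simp add: bij_betw_def)
  ultimately show ?thesis by (rule that)
qed

lemma bij_betw_shuffles_subsets:
  "bij_betw (\<lambda>\<sigma>. \<sigma> ` {..<k}) (shuffles k l) {B. B \<subseteq> {..<k+l} \<and> card B = k}"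
proof (rule bij_betw_imageI)
  show "inj_on (\<lambda>\<sigma>. \<sigma> ` {..<k}) (shuffles k l)"
    by (rule inj_onI) (rule shuffle_eqI)
  have "\<sigma> ` {..<k} \<subseteq> {..<k+l} \<and> card (\<sigma> ` {..<k}) = k" if "\<sigma> \<in> shuffles k l" for \<sigma>
    using shuffles_permutes[OF that] card_image[OF inj_on_subset[OF permutes_inj], of _ _ "{..<k}"]
    by (auto simp: permutes_lessThan_iff)
  moreover have "B \<in> (\<lambda>\<sigma>. \<sigma> ` {..<k}) ` shuffles k l" if "B \<subseteq> {..<k+l}" "card B = k" for B
    using shuffle_with_image[OF that] by blast
  ultimately show "(\<lambda>\<sigma>. \<sigma> ` {..<k}) ` shuffles k l = {B. B \<subseteq> {..<k+l} \<and> card B = k}"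
    by blast
qed

lemma bij_betw_image_permutes:
  fixes n :: nat
  assumes \<pi>: "\<pi> permutes {..<n}"
  shows "bij_betw ((`) \<pi>) {B. B \<subseteq> {..<n} \<and> card B = k} {B. B \<subseteq> {..<n} \<and> card B = k}"
proof (rule bij_betwI[where g = "(`) (inv \<pi>)"])
  have "inv \<pi> permutes {..<n}" by (rule permutes_inv[OF \<pi>])
  then show "(`) \<pi> \<in> {B. B \<subseteq> {..<n} \<and> card B = k} \<rightarrow> {B. B \<subseteq> {..<n} \<and> card B = k}"
    "(`) (inv \<pi>) \<in> {B. B \<subseteq> {..<n} \<and> card B = k} \<rightarrow> {B. B \<subseteq> {..<n} \<and> card B = k}"
    using \<pi> card_image[OF inj_on_subset[OF permutes_inj]] by (auto simp: permutes_lessThan_iff)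
  show "inv \<pi> ` \<pi> ` B = B" "\<pi> ` inv \<pi> ` B = B" for B
    by (simp_all add: image_comp permutes_inv_o[OF \<pi>])
qed

lemma mp_eval_Wk_bij_shift:
  fixes k l :: nat
  assumes G: "G \<in> Wk l" and u: "bij_betw u {k..<k+l} {k..<k+l}"
  shows "mp_eval G (\<lambda>i. b (u (i + k))) = mp_eval G (\<lambda>i. b (i + k))"
proof -
  have "bij_betw ((\<lambda>i. i - k) \<circ> u \<circ> (\<lambda>i. i + k)) {..<l} {..<l}"
    by (intro bij_betw_trans[OF bij_betw_add_nat] bij_betw_trans[OF u] bij_betw_diff_nat)
  then have shifted: "bij_betw (\<lambda>i. u (i + k) - k) {..<l} {..<l}"
    by (simp add: comp_def)
  have "mp_eval G (\<lambda>i. b (u (i + k))) = mp_eval G (\<lambda>i. (\<lambda>j. b (j + k)) (u (i + k) - k))"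
  proof (rule poly_fun_cong_below[OF poly_fun_mp_eval[OF Wk_vars_below[OF G]]])
    fix i assume "i < l"
    then have "u (i + k) \<in> {k..<k+l}" using u by (auto dest: bij_betwE)
    then show "b (u (i + k)) = b (u (i + k) - k + k)" by simp
  qed
  also have "\<dots> = mp_eval G (\<lambda>j. b (j + k))"
    by (rule mp_eval_Wk_bij[OF G shifted])
  finally show ?thesis .
qed

definition shuffle_term ::
    "'a::field mpoly \<Rightarrow> 'a mpoly \<Rightarrow> nat \<Rightarrow> nat \<Rightarrow> (nat \<Rightarrow> 'a) \<Rightarrow> (nat \<Rightarrow> nat) \<Rightarrow> 'a" where
  "shuffle_term F G k l a \<sigma> = mp_eval F (\<lambda>i. a (\<sigma> i)) * mp_eval G (\<lambda>i. a (\<sigma> (i + k))) *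
     (\<Prod>r<k. \<Prod>r'\<in>{k..<k+l}. (a (\<sigma> r) - a (\<sigma> r') + 1) / (a (\<sigma> r) - a (\<sigma> r')))"

definition shuffle_sum :: "'a::field mpoly \<Rightarrow> 'a mpoly \<Rightarrow> nat \<Rightarrow> nat \<Rightarrow> (nat \<Rightarrow> 'a) \<Rightarrow> 'a" where
  "shuffle_sum F G k l a = (\<Sum>\<sigma>\<in>shuffles k l. shuffle_term F G k l a \<sigma>)"

lemma shuffle_term_permute:
  "shuffle_term F G k l (\<lambda>i. a (\<pi> i)) \<sigma> = shuffle_term F G k l a (\<pi> \<circ> \<sigma>)"
  by (simp add: shuffle_term_def)

lemma shuffle_term_cong_image:
  fixes F G :: "'a::field mpoly"
  assumes F: "F \<in> Wk k" and G: "G \<in> Wk l"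
    and \<sigma>: "\<sigma> permutes {..<k+l}" and \<tau>: "\<tau> permutes {..<k+l}"
    and eq: "\<sigma> ` {..<k} = \<tau> ` {..<k}"
  shows "shuffle_term F G k l a \<tau> = shuffle_term F G k l a \<sigma>"
proof -
  define u where "u = inv \<sigma> \<circ> \<tau>"
  have u: "u permutes {..<k+l}"
    unfolding u_def by (rule permutes_compose[OF \<tau> permutes_inv[OF \<sigma>]])
  have \<tau>_eq: "\<tau> x = \<sigma> (u x)" for x
    by (simp add: u_def permutes_inverses[OF \<sigma>])
  have "u ` {..<k} = inv \<sigma> ` \<sigma> ` {..<k}"
    by (simp add: u_def image_comp eq)
  then have "u ` {..<k} = {..<k}"
    by (simp add: image_inv_f_f[OF permutes_inj[OF \<sigma>]])
  then have lower: "bij_betw u {..<k} {..<k}"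
    by (intro bij_betw_imageI inj_on_subset[OF permutes_inj[OF u]]) auto
  have "u ` {k..<k+l} = {k..<k+l}"
    using permutes_image_upper_block[OF u] \<open>u ` {..<k} = {..<k}\<close> by auto
  then have upper: "bij_betw u {k..<k+l} {k..<k+l}"
    by (intro bij_betw_imageI inj_on_subset[OF permutes_inj[OF u]]) auto
  have F_eq: "mp_eval F (\<lambda>i. a (\<tau> i)) = mp_eval F (\<lambda>i. a (\<sigma> i))"
    using mp_eval_Wk_bij[OF F lower, of "\<lambda>j. a (\<sigma> j)"] by (simp add: \<tau>_eq)
  have G_eq: "mp_eval G (\<lambda>i. a (\<tau> (i + k))) = mp_eval G (\<lambda>i. a (\<sigma> (i + k)))"
    using mp_eval_Wk_bij_shift[OF G upper, of "\<lambda>j. a (\<sigma> j)"] by (simp add: \<tau>_eq)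
  define h where "h x y = (a x - a y + 1) / (a x - a y)" for x y
  have "(\<Prod>r<k. \<Prod>r'\<in>{k..<k+l}. h (\<tau> r) (\<tau> r')) = (\<Prod>r<k. \<Prod>r'\<in>{k..<k+l}. h (\<sigma> (u r)) (\<sigma> (u r')))"
    by (simp add: \<tau>_eq)
  also have "\<dots> = (\<Prod>r<k. \<Prod>r'\<in>{k..<k+l}. h (\<sigma> (u r)) (\<sigma> r'))"
    by (rule prod.cong[OF refl], rule prod.reindex_bij_betw[OF upper])
  also have "\<dots> = (\<Prod>r<k. \<Prod>r'\<in>{k..<k+l}. h (\<sigma> r) (\<sigma> r'))"
    by (rule prod.reindex_bij_betw[OF lower, of "\<lambda>r. \<Prod>r'\<in>{k..<k+l}. h (\<sigma> r) (\<sigma> r')"])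
  finally show ?thesis
    using F_eq G_eq by (simp add: shuffle_term_def h_def)
qed

text \<open>A shuffle is determined by the set of positions of its first block, and permuting the
  variables permutes these sets.\<close>
lemma shuffle_sum_permute:
  fixes F G :: "'a::field mpoly"
  assumes F: "F \<in> Wk k" and G: "G \<in> Wk l" and \<pi>: "\<pi> permutes {..<k+l}"
  shows "shuffle_sum F G k l (\<lambda>i. a (\<pi> i)) = shuffle_sum F G k l a"
proof -
  let ?K = "{B. B \<subseteq> {..<k+l} \<and> card B = k}"
  define T where "T B = shuffle_term F G k l a (SOME \<sigma>. \<sigma> \<in> shuffles k l \<and> \<sigma> ` {..<k} = B)" for B
  have T: "T (\<tau> ` {..<k}) = shuffle_term F G k l a \<tau>" if \<tau>: "\<tau> permutes {..<k+l}" for \<tau>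
  proof -
    have "\<tau> ` {..<k} \<subseteq> {..<k+l}" "card (\<tau> ` {..<k}) = k"
      using card_image[OF inj_on_subset[OF permutes_inj[OF \<tau>]]] by (auto simp: permutes_lessThan_iff[OF \<tau>])
    then have "\<exists>\<sigma>. \<sigma> \<in> shuffles k l \<and> \<sigma> ` {..<k} = \<tau> ` {..<k}"
      by (metis shuffle_with_image)
    then have "(SOME \<sigma>. \<sigma> \<in> shuffles k l \<and> \<sigma> ` {..<k} = \<tau> ` {..<k}) \<in> shuffles k l \<and>
        (SOME \<sigma>. \<sigma> \<in> shuffles k l \<and> \<sigma> ` {..<k} = \<tau> ` {..<k}) ` {..<k} = \<tau> ` {..<k}"
      by (rule someI_ex)
    then show ?thesis
      unfolding T_def using shuffle_term_cong_image[OF F G \<tau>] shuffles_permutes by metis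
  qed
  have "(\<Sum>\<sigma>\<in>shuffles k l. shuffle_term F G k l (\<lambda>i. a (\<pi> i)) \<sigma>)
      = (\<Sum>\<sigma>\<in>shuffles k l. T (\<pi> ` (\<sigma> ` {..<k})))"
  proof (rule sum.cong[OF refl])
    fix \<sigma> assume "\<sigma> \<in> shuffles k l"
    then have "\<pi> \<circ> \<sigma> permutes {..<k+l}"
      using permutes_compose[OF shuffles_permutes \<pi>] by blast
    then show "shuffle_term F G k l (\<lambda>i. a (\<pi> i)) \<sigma> = T (\<pi> ` (\<sigma> ` {..<k}))"
      using T[of "\<pi> \<circ> \<sigma>"] by (simp add: shuffle_term_permute image_comp)
  qed
  also have "\<dots> = (\<Sum>B\<in>?K. T (\<pi> ` B))"
    by (rule sum.reindex_bij_betw[OF bij_betw_shuffles_subsets])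
  also have "\<dots> = (\<Sum>B\<in>?K. T B)"
    by (rule sum.reindex_bij_betw[OF bij_betw_image_permutes[OF \<pi>]])
  also have "\<dots> = (\<Sum>\<sigma>\<in>shuffles k l. T (\<sigma> ` {..<k}))"
    by (rule sum.reindex_bij_betw[OF bij_betw_shuffles_subsets, symmetric])
  also have "\<dots> = (\<Sum>\<sigma>\<in>shuffles k l. shuffle_term F G k l a \<sigma>)"
    by (intro sum.cong) (simp_all add: T shuffles_permutes)
  finally show ?thesis by (simp only: shuffle_sum_def)
qed

section \<open>The Vandermonde product\<close>

definition ordered_pairs :: "nat \<Rightarrow> (nat \<times> nat) set" where
  "ordered_pairs n = {x \<in> {..<n} \<times> {..<n}. fst x < snd x}"

definition vandermonde :: "nat \<Rightarrow> (nat \<Rightarrow> 'a::comm_ring_1) \<Rightarrow> 'a" where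
  "vandermonde n a = (\<Prod>x\<in>ordered_pairs n. a (fst x) - a (snd x))"

lemma finite_ordered_pairs [simp]: "finite (ordered_pairs n)"
  unfolding ordered_pairs_def by (rule finite_subset[of _ "{..<n} \<times> {..<n}"]) auto

lemma poly_fun_vandermonde: "poly_fun n (vandermonde n)"
  unfolding vandermonde_def
  by (intro poly_fun_prod poly_fun_diff poly_fun_var) (auto simp: ordered_pairs_def)

lemma vandermonde_nonzero:
  fixes a :: "nat \<Rightarrow> 'a::field"
  assumes "inj_on a {..<n}"
  shows "vandermonde n a \<noteq> 0"
  using assms by (auto simp: vandermonde_def ordered_pairs_def dest: inj_onD)

lemma vandermonde_eq_0:
  fixes a :: "nat \<Rightarrow> 'a::field"
  assumes "i < n" "j < n" "i \<noteq> j" "a i = a j"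
  shows "vandermonde n a = 0"
  unfolding vandermonde_def
proof (rule prod_zero[OF finite_ordered_pairs])
  show "\<exists>x\<in>ordered_pairs n. a (fst x) - a (snd x) = 0"
    using assms by (intro bexI[of _ "(min i j, max i j)"]) (auto simp: ordered_pairs_def min_def max_def)
qed

text \<open>The transposition permutes the factors other than \<open>x\<^sub>m - x\<^sub>m\<^sub>+\<^sub>1\<close>, which changes sign.\<close>
lemma vandermonde_transpose:
  assumes "Suc m < n"
  shows "vandermonde n (\<lambda>i. a (transpose m (Suc m) i)) = - vandermonde n a"
proof -
  let ?t = "transpose m (Suc m)"
  define Rest where "Rest = ordered_pairs n - {(m, Suc m)}"
  define g where "g x = a (fst x) - a (snd x)" for x
  define \<phi> where "\<phi> x = (?t (fst x), ?t (snd x))" for x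
  have mem: "(m, Suc m) \<in> ordered_pairs n"
    using assms by (simp add: ordered_pairs_def)
  have "\<phi> \<in> Rest \<rightarrow> Rest"
    using assms unfolding Rest_def ordered_pairs_def \<phi>_def by (auto simp: transpose_def split: if_splits)
  moreover have "\<phi> (\<phi> x) = x" for x
    by (simp add: \<phi>_def)
  ultimately have "(\<Prod>x\<in>Rest. g (\<phi> x)) = (\<Prod>x\<in>Rest. g x)"
    by (intro prod.reindex_bij_betw bij_betwI[where g = \<phi>])
  moreover have "g (\<phi> (m, Suc m)) = - g (m, Suc m)"
    by (simp add: g_def \<phi>_def)
  ultimately have "g (\<phi> (m, Suc m)) * (\<Prod>x\<in>Rest. g (\<phi> x)) = - (g (m, Suc m) * (\<Prod>x\<in>Rest. g x))"
    by simp
  then show ?thesis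
    using prod.remove[OF finite_ordered_pairs mem, of g] prod.remove[OF finite_ordered_pairs mem, of "g \<circ> \<phi>"]
    by (simp add: vandermonde_def g_def \<phi>_def Rest_def)
qed

lemma vandermonde_divisible_by_prod_block_diffs:
  fixes k l :: nat
  assumes inf: "infinite (UNIV::'a::field set)" and \<sigma>: "\<sigma> permutes {..<k+l}"
  shows "\<exists>R. poly_fun (k+l) R \<and> (\<forall>a::nat \<Rightarrow> 'a.
    vandermonde (k+l) a = R a * (\<Prod>r<k. \<Prod>r'\<in>{k..<k+l}. a (\<sigma> r) - a (\<sigma> r')))"
proof -
  let ?X = "{..<k} \<times> {k..<k+l}"
  have "\<exists>R. poly_fun (k+l) R \<and> (\<forall>a::nat \<Rightarrow> 'a.
      vandermonde (k+l) a = R a * (\<Prod>x\<in>?X. a (\<sigma> (fst x)) - a (\<sigma> (snd x))))"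
  proof (rule poly_fun_divisible_by_prod_diffs[OF inf _ poly_fun_vandermonde,
        where u = "\<lambda>x. \<sigma> (fst x)" and v = "\<lambda>x. \<sigma> (snd x)"])
    fix x y assume "x \<in> ?X" "y \<in> ?X" "x \<noteq> y"
    then show "{\<sigma> (fst x), \<sigma> (snd x)} \<noteq> {\<sigma> (fst y), \<sigma> (snd y)}"
      by (auto simp: doubleton_eq_iff prod_eq_iff inj_eq[OF permutes_inj[OF \<sigma>]])
  next
    fix x and a :: "nat \<Rightarrow> 'a" assume "x \<in> ?X" "a (\<sigma> (fst x)) = a (\<sigma> (snd x))"
    then show "vandermonde (k+l) a = 0"
      by (intro vandermonde_eq_0[where i = "\<sigma> (fst x)" and j = "\<sigma> (snd x)"])
        (auto simp: permutes_lessThan_iff[OF \<sigma>] inj_eq[OF permutes_inj[OF \<sigma>]])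
  next
    fix x assume "x \<in> ?X"
    then show "\<sigma> (fst x) < k + l \<and> \<sigma> (snd x) < k + l \<and> \<sigma> (fst x) \<noteq> \<sigma> (snd x)"
      by (auto simp: permutes_lessThan_iff[OF \<sigma>] inj_eq[OF permutes_inj[OF \<sigma>]])
  qed simp
  then show ?thesis
    by (simp add: prod.cartesian_product case_prod_beta)
qed

text \<open>An alternating polynomial vanishes on every diagonal \<open>x\<^sub>i = x\<^sub>j\<close> (here \<open>2 \<noteq> 0\<close> is used),
  hence is divisible by every \<open>x\<^sub>i - x\<^sub>j\<close>.\<close>
lemma alternating_poly_fun_divisible_by_vandermonde:
  fixes P :: "(nat \<Rightarrow> 'a::field) \<Rightarrow> 'a"
  assumes inf: "infinite (UNIV::'a set)" and two: "(2::'a) \<noteq> 0" and P: "poly_fun n P"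
    and alt: "\<And>m (a :: nat \<Rightarrow> 'a). Suc m < n \<Longrightarrow> P (\<lambda>i. a (transpose m (Suc m) i)) = - P a"
  shows "\<exists>Q. poly_fun n Q \<and> (\<forall>a. P a = Q a * vandermonde n a)"
proof -
  have diag: "P a = 0" if "i + d + 1 < n" "a i = a (i + d + 1)" for d i and a :: "nat \<Rightarrow> 'a"
    using that
  proof (induction d arbitrary: a)
    case 0
    then have "(\<lambda>j. a (transpose i (Suc i) j)) = a"
      by (auto simp: transpose_def)
    then have "2 * P a = 0"
      using alt[of i a] 0 by simp
    with two show ?case by simp
  next
    case (Suc d)
    let ?b = "\<lambda>j. a (transpose (i + d + 1) (Suc (i + d + 1)) j)"
    have "?b i = ?b (i + d + 1)"
      using Suc.prems by (simp add: transpose_def)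
    then have "P ?b = 0"
      using Suc.prems by (intro Suc.IH) auto
    moreover have "P ?b = - P a"
      using Suc.prems by (intro alt) simp
    ultimately show ?case by simp
  qed
  have "\<exists>Q. poly_fun n Q \<and> (\<forall>a. P a = Q a * (\<Prod>x\<in>ordered_pairs n. a (fst x) - a (snd x)))"
  proof (rule poly_fun_divisible_by_prod_diffs[OF inf finite_ordered_pairs P, where u = fst and v = snd])
    fix x and a :: "nat \<Rightarrow> 'a" assume "x \<in> ordered_pairs n" "a (fst x) = a (snd x)"
    then show "P a = 0"
      using diag[of "fst x" "snd x - fst x - 1" a] by (auto simp: ordered_pairs_def)
  qed (auto simp: ordered_pairs_def doubleton_eq_iff prod_eq_iff)
  then show ?thesis
    by (simp add: vandermonde_def)
qed

section \<open>The shuffle product is a symmetric polynomial\<close>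

lemma poly_fun_shuffle_numerator:
  fixes F G :: "'a::field mpoly"
  assumes F: "F \<in> Wk k" and G: "G \<in> Wk l" and \<sigma>: "\<sigma> permutes {..<k+l}"
  shows "poly_fun (k+l) (\<lambda>a. mp_eval F (\<lambda>i. a (\<sigma> i)) * mp_eval G (\<lambda>i. a (\<sigma> (i + k))) *
    (\<Prod>r<k. \<Prod>r'\<in>{k..<k+l}. a (\<sigma> r) - a (\<sigma> r') + 1))"
proof -
  have lt: "\<sigma> i < k + l" if "i < k + l" for i
    using permutes_lessThan_iff[OF \<sigma>] that by simp
  have "poly_fun (k+l) (\<lambda>a. mp_eval F (\<lambda>i. a (\<sigma> i)))"
    by (rule poly_fun_compose[OF poly_fun_mp_eval[OF Wk_vars_below[OF F]]])
      (auto intro!: poly_fun_var lt)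
  moreover have "poly_fun (k+l) (\<lambda>a. mp_eval G (\<lambda>i. a (\<sigma> (i + k))))"
    by (rule poly_fun_compose[OF poly_fun_mp_eval[OF Wk_vars_below[OF G]]])
      (auto intro!: poly_fun_var lt)
  moreover have "poly_fun (k+l) (\<lambda>a. \<Prod>r<k. \<Prod>r'\<in>{k..<k+l}. a (\<sigma> r) - a (\<sigma> r') + 1)"
    by (intro poly_fun_prod poly_fun_add poly_fun_diff poly_fun_var poly_fun_const) (auto intro: lt)
  ultimately show ?thesis
    by (intro poly_fun_mult)
qed

text \<open>Multiplying by the Vandermonde product clears all denominators \<open>x\<^sub>r - x\<^sub>r\<^sub>'\<close>.\<close>
lemma shuffle_sum_times_vandermonde:
  fixes F G :: "'a::field mpoly"
  assumes inf: "infinite (UNIV::'a set)" and F: "F \<in> Wk k" and G: "G \<in> Wk l"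
  shows "\<exists>P. poly_fun (k+l) P \<and>
    (\<forall>a. inj_on a {..<k+l} \<longrightarrow> P a = shuffle_sum F G k l a * vandermonde (k+l) a)"
proof -
  define D where "D \<sigma> a = (\<Prod>r<k. \<Prod>r'\<in>{k..<k+l}. a (\<sigma> r) - a (\<sigma> r'))" for \<sigma> and a :: "nat \<Rightarrow> 'a"
  define N where "N \<sigma> a = mp_eval F (\<lambda>i. a (\<sigma> i)) * mp_eval G (\<lambda>i. a (\<sigma> (i + k))) *
    (\<Prod>r<k. \<Prod>r'\<in>{k..<k+l}. a (\<sigma> r) - a (\<sigma> r') + 1)" for \<sigma> and a :: "nat \<Rightarrow> 'a"
  have "\<forall>\<sigma>\<in>shuffles k l. \<exists>R. poly_fun (k+l) R \<and> (\<forall>a. vandermonde (k+l) a = R a * D \<sigma> a)"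
    using vandermonde_divisible_by_prod_block_diffs[OF inf shuffles_permutes] unfolding D_def by blast
  then obtain R where R: "\<And>\<sigma>. \<sigma> \<in> shuffles k l \<Longrightarrow> poly_fun (k+l) (R \<sigma>)"
    "\<And>\<sigma> a. \<sigma> \<in> shuffles k l \<Longrightarrow> vandermonde (k+l) a = R \<sigma> a * D \<sigma> a"
    by metis
  have "poly_fun (k+l) (N \<sigma>)" if "\<sigma> \<in> shuffles k l" for \<sigma>
    unfolding N_def by (rule poly_fun_shuffle_numerator[OF F G shuffles_permutes[OF that]])
  then have "poly_fun (k+l) (\<lambda>a. \<Sum>\<sigma>\<in>shuffles k l. N \<sigma> a * R \<sigma> a)"
    by (intro poly_fun_sum poly_fun_mult R)
  moreover have "(\<Sum>\<sigma>\<in>shuffles k l. N \<sigma> a * R \<sigma> a) = shuffle_sum F G k l a * vandermonde (k+l) a"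
    if a: "inj_on a {..<k+l}" for a
  proof -
    have "shuffle_term F G k l a \<sigma> * vandermonde (k+l) a = N \<sigma> a * R \<sigma> a" if \<sigma>: "\<sigma> \<in> shuffles k l" for \<sigma>
    proof -
      have "a (\<sigma> r) \<noteq> a (\<sigma> r')" if "r < k" "r' \<in> {k..<k+l}" for r r'
        using that a permutes_lessThan_iff[OF shuffles_permutes[OF \<sigma>]]
          inj_eq[OF permutes_inj[OF shuffles_permutes[OF \<sigma>]]]
        by (auto dest: inj_onD)
      then have "D \<sigma> a \<noteq> 0"
        by (simp add: D_def)
      moreover have "(\<Prod>r<k. \<Prod>r'\<in>{k..<k+l}. (a (\<sigma> r) - a (\<sigma> r') + 1) / (a (\<sigma> r) - a (\<sigma> r')))
          = (\<Prod>r<k. \<Prod>r'\<in>{k..<k+l}. a (\<sigma> r) - a (\<sigma> r') + 1) / D \<sigma> a"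
        by (simp add: D_def prod_dividef)
      ultimately show ?thesis
        unfolding shuffle_term_def R(2)[OF \<sigma>, of a] N_def by (simp add: field_simps)
    qed
    then show ?thesis
      by (simp add: shuffle_sum_def sum_distrib_right)
  qed
  ultimately show ?thesis by blast
qed

lemma shuffle_sum_poly_fun:
  fixes F G :: "'a::field mpoly"
  assumes inf: "infinite (UNIV::'a set)" and two: "(2::'a) \<noteq> 0"
    and F: "F \<in> Wk k" and G: "G \<in> Wk l"
  shows "\<exists>Q. poly_fun (k+l) Q \<and> (\<forall>a. inj_on a {..<k+l} \<longrightarrow> Q a = shuffle_sum F G k l a)"
proof -
  define n where "n = k + l"
  let ?S = "shuffle_sum F G k l" and ?V = "vandermonde n"
  obtain P where P: "poly_fun n P" "\<And>a. inj_on a {..<n} \<Longrightarrow> P a = ?S a * ?V a"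
    using shuffle_sum_times_vandermonde[OF inf F G] unfolding n_def by blast
  have "P (\<lambda>i. a (transpose m (Suc m) i)) = - P a" if "Suc m < n" for m a
  proof -
    let ?t = "transpose m (Suc m)"
    have t: "?t permutes {..<n}"
      using that by (intro permutes_swap_id) auto
    have "P (\<lambda>i. a (?t i)) + P a = 0"
    proof (rule poly_fun_eq_0_if_eq_0_on_inj[OF inf, of n "\<lambda>a. P (\<lambda>i. a (?t i)) + P a"])
      show "poly_fun n (\<lambda>a. P (\<lambda>i. a (?t i)) + P a)"
        by (intro poly_fun_add poly_fun_permute[OF P(1) t] P(1))
      fix b :: "nat \<Rightarrow> 'a" assume b: "inj_on b {..<n}"
      have "P (\<lambda>i. b (?t i)) = ?S (\<lambda>i. b (?t i)) * ?V (\<lambda>i. b (?t i))"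
        by (rule P(2)[OF inj_on_permute[OF b t]])
      also have "\<dots> = - P b"
        using shuffle_sum_permute[OF F G t[unfolded n_def]]
        by (simp add: vandermonde_transpose[OF that] P(2)[OF b])
      finally show "P (\<lambda>i. b (?t i)) + P b = 0" by simp
    qed
    then show ?thesis by (simp add: eq_neg_iff_add_eq_0)
  qed
  then obtain Q where Q: "poly_fun n Q" "\<And>a. P a = Q a * ?V a"
    using alternating_poly_fun_divisible_by_vandermonde[OF inf two P(1)] by blast
  have "Q a = ?S a" if "inj_on a {..<n}" for a
    using P(2)[OF that] Q(2)[of a] vandermonde_nonzero[OF that] by simp
  with Q(1) show ?thesis
    unfolding n_def by blast
qed

lemma star_exists:
  fixes F G :: "'a::field mpoly"
  assumes inf: "infinite (UNIV::'a set)" and two: "(2::'a) \<noteq> 0"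
    and F: "F \<in> Wk k" and G: "G \<in> Wk l"
  shows "\<exists>H\<in>Wk (k+l). \<forall>a. inj_on a {..<k+l} \<longrightarrow> mp_eval H a = shuffle_sum F G k l a"
proof -
  obtain Q where Q: "poly_fun (k+l) Q" "\<And>a. inj_on a {..<k+l} \<Longrightarrow> Q a = shuffle_sum F G k l a"
    using shuffle_sum_poly_fun[OF assms] by blast
  have "Q (\<lambda>i. a (\<pi> i)) = Q a" if \<pi>: "\<pi> permutes {..<k+l}" for \<pi> a
  proof -
    have "Q (\<lambda>i. a (\<pi> i)) - Q a = 0"
    proof (rule poly_fun_eq_0_if_eq_0_on_inj[OF inf, of "k+l" "\<lambda>a. Q (\<lambda>i. a (\<pi> i)) - Q a"])
      show "poly_fun (k+l) (\<lambda>a. Q (\<lambda>i. a (\<pi> i)) - Q a)"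
        by (intro poly_fun_diff poly_fun_permute[OF Q(1) \<pi>] Q(1))
      fix b :: "nat \<Rightarrow> 'a" assume "inj_on b {..<k+l}"
      then show "Q (\<lambda>i. b (\<pi> i)) - Q b = 0"
        using Q(2) Q(2)[OF inj_on_permute[OF _ \<pi>]] shuffle_sum_permute[OF F G \<pi>] by simp
    qed
    then show ?thesis by simp
  qed
  then obtain H where "H \<in> Wk (k+l)" "mp_eval H = Q"
    using poly_fun_symmetric_imp_Wk[OF inf Q(1)] by blast
  then show ?thesis
    using Q(2) by auto
qed

lemma star_eqI:
  fixes F G :: "'a::field mpoly"
  assumes inf: "infinite (UNIV::'a set)" and H: "H \<in> Wk (k+l)"
    and eval: "\<And>a. inj_on a {..<k+l} \<Longrightarrow> mp_eval H a = shuffle_sum F G k l a"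
  shows "star k l F G = H"
proof -
  have "star k l F G = (THE H. H \<in> Wk (k+l) \<and>
      (\<forall>a. inj_on a {..<k+l} \<longrightarrow> mp_eval H a = shuffle_sum F G k l a))"
    unfolding star_def shuffle_sum_def shuffle_term_def ..
  also have "\<dots> = H"
  proof (rule the_equality)
    fix H' assume "H' \<in> Wk (k+l) \<and> (\<forall>a. inj_on a {..<k+l} \<longrightarrow> mp_eval H' a = shuffle_sum F G k l a)"
    then show "H' = H"
      using H eval by (intro mp_eq_if_eval_eq_on_inj[OF inf Wk_vars_below Wk_vars_below]) auto
  qed (use H eval in blast)
  finally show ?thesis .
qed

lemma star_Wk:
  fixes F G :: "'a::field mpoly"
  assumes "infinite (UNIV::'a set)" "(2::'a) \<noteq> 0" "F \<in> Wk k" "G \<in> Wk l"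
  shows "star k l F G \<in> Wk (k+l)"
  using star_exists[OF assms] star_eqI[OF assms(1)] by metis

lemma mp_eval_star:
  fixes F G :: "'a::field mpoly"
  assumes "infinite (UNIV::'a set)" "(2::'a) \<noteq> 0" "F \<in> Wk k" "G \<in> Wk l"
    and "inj_on a {..<k+l}"
  shows "mp_eval (star k l F G) a = shuffle_sum F G k l a"
  using star_exists[OF assms(1-4)] star_eqI[OF assms(1)] assms(5) by metis

section \<open>Vanishing on chains\<close>

definition is_chain :: "nat \<Rightarrow> nat \<Rightarrow> (nat \<Rightarrow> nat) \<Rightarrow> (nat \<Rightarrow> 'a::semiring_1) \<Rightarrow> bool" where
  "is_chain p k \<iota> a \<longleftrightarrow> inj_on \<iota> {..<p} \<and> \<iota> ` {..<p} \<subseteq> {..<k} \<and> (\<forall>j<p. a (\<iota> j) + of_nat j = a (\<iota> 0))"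

text \<open>Unlike \<open>Jk\<close>, the chain may occupy any \<open>p\<close> of the \<open>k\<close> variables. By symmetry this is the
  same set, but in this form closure under the shuffle product, which moves variables between
  the two factors, is direct.\<close>
definition chain_vanishing :: "nat \<Rightarrow> nat \<Rightarrow> 'a::field mpoly set" where
  "chain_vanishing p k = {f \<in> Wk k. \<forall>\<iota> a. is_chain p k \<iota> a \<longrightarrow> mp_eval f a = 0}"

lemma chain_vanishingD: "f \<in> chain_vanishing p k \<Longrightarrow> is_chain p k \<iota> a \<Longrightarrow> mp_eval f a = 0"
  by (simp add: chain_vanishing_def)

lemma chain_vanishing_Wk: "f \<in> chain_vanishing p k \<Longrightarrow> f \<in> Wk k"
  by (simp add: chain_vanishing_def)

lemma zero_chain_vanishing: "0 \<in> chain_vanishing p k"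
  by (simp add: chain_vanishing_def zero_Wk)

lemma add_chain_vanishing: "f \<in> chain_vanishing p k \<Longrightarrow> g \<in> chain_vanishing p k \<Longrightarrow> f + g \<in> chain_vanishing p k"
  by (simp add: chain_vanishing_def add_Wk mp_eval_add)

lemma sum_chain_vanishing: "(\<And>x. x \<in> X \<Longrightarrow> f x \<in> chain_vanishing p k) \<Longrightarrow> sum f X \<in> chain_vanishing p k"
  by (induction X rule: infinite_finite_induct) (simp_all add: zero_chain_vanishing add_chain_vanishing)

lemma map_mult_chain_vanishing: "f \<in> chain_vanishing p k \<Longrightarrow> Poly_Mapping.map ((*) c) f \<in> chain_vanishing p k"
  by (simp add: chain_vanishing_def map_mult_Wk mp_eval_map_mult)

lemma chain_vanishing_if_less:
  assumes "k < p" "f \<in> Wk k"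
  shows "f \<in> chain_vanishing p k"
proof -
  have "\<not> is_chain p k \<iota> a" for \<iota> a
  proof
    assume "is_chain p k \<iota> a"
    then have "card {..<p} \<le> card {..<k}"
      by (intro card_inj_on_le) (auto simp: is_chain_def)
    with assms(1) show False by simp
  qed
  with assms(2) show ?thesis
    by (auto simp: chain_vanishing_def)
qed

lemma chain_vanishing_subset_Jk: "chain_vanishing p k \<subseteq> Jk p k"
proof
  fix f assume f: "f \<in> chain_vanishing p k"
  have "mp_eval f a = 0" if "p \<le> k" "\<forall>i<p. a i + of_nat i = a 0" for a
    using that by (intro chain_vanishingD[OF f, of id]) (auto simp: is_chain_def)
  then show "f \<in> Jk p k"
    using chain_vanishing_Wk[OF f] by (simp add: Jk_def)
qed

lemma is_chain_step:
  fixes a :: "nat \<Rightarrow> 'a::comm_ring_1"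
  assumes chain: "is_chain p k \<iota> a" and p: "of_nat p = (0::'a)" and "j < p"
  shows "a (\<iota> j) - a (\<iota> (if j = 0 then p - 1 else j - 1)) + 1 = 0"
proof -
  have val: "a (\<iota> i) = a (\<iota> 0) - of_nat i" if "i < p" for i
    using chain that unfolding is_chain_def by (metis add_diff_cancel_right')
  show ?thesis
  proof (cases "j = 0")
    case True
    have "of_nat (p - 1) = (of_nat p - 1 :: 'a)"
      using \<open>j < p\<close> by (simp add: of_nat_diff)
    then show ?thesis
      using True val[of "p - 1"] \<open>j < p\<close> p by simp
  next
    case False
    then have "of_nat j = (of_nat (j - 1) + 1 :: 'a)"
      by (simp add: of_nat_diff)
    then show ?thesis
      using False val[of j] val[of "j - 1"] \<open>j < p\<close> by simp
  qed
qed

lemma is_chain_inj: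
  fixes a :: "nat \<Rightarrow> 'a::comm_ring_1"
  assumes "is_chain p k \<iota> a" and "CHAR('a) = p"
  shows "inj_on a (\<iota> ` {..<p})"
proof (rule inj_onI)
  fix x y assume "x \<in> \<iota> ` {..<p}" "y \<in> \<iota> ` {..<p}" "a x = a y"
  then obtain i j where ij: "i < p" "j < p" "x = \<iota> i" "y = \<iota> j" "a (\<iota> i) = a (\<iota> j)" by auto
  with assms(1) have "(of_nat i :: 'a) = of_nat j"
    unfolding is_chain_def by (metis add_left_cancel)
  then have "of_nat (max i j - min i j) = (0::'a)"
    by (cases "i \<le> j") (simp_all add: of_nat_diff max_def min_def)
  then have "p dvd max i j - min i j"
    using assms(2) of_nat_eq_0_iff_char_dvd by metis
  moreover have "max i j - min i j < p"
    using ij(1,2) by auto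
  ultimately have "max i j - min i j = 0"
    by (metis dvd_imp_le gr0I not_le)
  then have "i = j" by simp
  then show "x = y" using ij by simp
qed

lemma cyclic_boundary:
  fixes p :: nat
  assumes "Q i" "i < p" "\<not> Q j" "j < p"
  shows "\<exists>m<p. Q m \<and> \<not> Q (if m = 0 then p - 1 else m - 1)"
proof (cases "\<exists>j' m. j' < m \<and> m < p \<and> \<not> Q j' \<and> Q m")
  case True
  then obtain j' where ex: "\<exists>m. j' < m \<and> m < p \<and> \<not> Q j' \<and> Q m" by blast
  define m where "m = (LEAST m. j' < m \<and> m < p \<and> \<not> Q j' \<and> Q m)"
  have m: "j' < m" "m < p" "\<not> Q j'" "Q m"
    using LeastI_ex[OF ex] unfolding m_def by blast+
  have "\<not> Q (m - 1)"
  proof (cases "m - 1 = j'")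
    case False
    then have "m - 1 < m" "j' < m - 1" using m(1) by linarith+
    then show ?thesis
      using not_less_Least[of "m - 1" "\<lambda>m. j' < m \<and> m < p \<and> \<not> Q j' \<and> Q m"] m
      unfolding m_def by auto
  qed (use m(3) in simp)
  with m show ?thesis by (intro exI[of _ m]) auto
next
  case False
  have "Q 0"
  proof (rule ccontr)
    assume "\<not> Q 0"
    moreover have "0 < i" using assms(1) \<open>\<not> Q 0\<close> by (cases i) auto
    ultimately show False using False assms(1,2) by blast
  qed
  moreover have "\<not> Q (p - 1)"
  proof
    assume "Q (p - 1)"
    then have "j < p - 1" using assms(3,4) by (cases "j = p - 1") auto
    moreover have "p - 1 < p" using assms(4) by simp
    ultimately show False using False assms(3) \<open>Q (p - 1)\<close> by blast
  qed
  ultimately show ?thesis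
    using assms(2) by (intro exI[of _ 0]) auto
qed

lemma inv_permutes_upper_block:
  fixes k l :: nat
  assumes \<sigma>: "\<sigma> permutes {..<k+l}" and "x < k + l" "x \<notin> \<sigma> ` {..<k}"
  shows "inv \<sigma> x \<in> {k..<k+l}"
proof -
  have "x \<in> \<sigma> ` {k..<k+l}"
    using assms(2,3) permutes_image_upper_block[OF \<sigma>] by auto
  then show ?thesis
    using permutes_inverses(2)[OF \<sigma>] by auto
qed

lemma is_chain_lower_block:
  assumes \<sigma>: "\<sigma> permutes {..<k+l}" and chain: "is_chain p (k+l) \<iota> a"
    and lower: "\<forall>j<p. \<iota> j \<in> \<sigma> ` {..<k}"
  shows "is_chain p k (\<lambda>j. inv \<sigma> (\<iota> j)) (\<lambda>i. a (\<sigma> i))"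
proof -
  have "inv \<sigma> (\<iota> j) < k" if "j < p" for j
    using lower that permutes_inverses(2)[OF \<sigma>] by auto
  moreover have "inj_on (\<lambda>j. inv \<sigma> (\<iota> j)) {..<p}"
    using chain by (auto simp: is_chain_def inj_on_def inj_eq[OF permutes_inj[OF permutes_inv[OF \<sigma>]]])
  ultimately show ?thesis
    using chain by (auto simp: is_chain_def permutes_inverses(1)[OF \<sigma>])
qed

lemma is_chain_upper_block:
  assumes \<sigma>: "\<sigma> permutes {..<k+l}" and chain: "is_chain p (k+l) \<iota> a" and "0 < p"
    and upper: "\<forall>j<p. \<iota> j \<notin> \<sigma> ` {..<k}"
  shows "is_chain p l (\<lambda>j. inv \<sigma> (\<iota> j) - k) (\<lambda>i. a (\<sigma> (i + k)))"
proof -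
  have block: "inv \<sigma> (\<iota> j) \<in> {k..<k+l}" if "j < p" for j
    using inv_permutes_upper_block[OF \<sigma>] chain upper that by (auto simp: is_chain_def)
  have "inj_on (\<lambda>j. inv \<sigma> (\<iota> j) - k) {..<p}"
  proof (rule inj_onI)
    fix x y assume xy: "x \<in> {..<p}" "y \<in> {..<p}" "inv \<sigma> (\<iota> x) - k = inv \<sigma> (\<iota> y) - k"
    then have "inv \<sigma> (\<iota> x) = inv \<sigma> (\<iota> y)"
      using block[of x] block[of y] by auto
    then show "x = y"
      using chain xy(1,2) permutes_inj[OF permutes_inv[OF \<sigma>]]
      by (auto simp: is_chain_def dest: injD inj_onD)
  qed
  with block show ?thesis
    using chain \<open>0 < p\<close> by (fastforce simp: is_chain_def permutes_inverses(1)[OF \<sigma>])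
qed

lemma shuffle_term_eq_0_at_chain:
  fixes F G :: "'a::field mpoly"
  assumes char: "CHAR('a) = p" and "0 < p"
    and F: "F \<in> chain_vanishing p k" and G: "G \<in> chain_vanishing p l" and "\<sigma> \<in> shuffles k l"
    and chain: "is_chain p (k+l) \<iota> a"
  shows "shuffle_term F G k l a \<sigma> = 0"
proof -
  have \<sigma>: "\<sigma> permutes {..<k+l}" by (rule shuffles_permutes) fact
  consider "\<forall>j<p. \<iota> j \<in> \<sigma> ` {..<k}" | "\<forall>j<p. \<iota> j \<notin> \<sigma> ` {..<k}"
    | j where "j < p" "\<iota> j \<in> \<sigma> ` {..<k}" "\<iota> (if j = 0 then p - 1 else j - 1) \<notin> \<sigma> ` {..<k}"
    using cyclic_boundary[of "\<lambda>j. \<iota> j \<in> \<sigma> ` {..<k}"] by blast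
  then show ?thesis
  proof cases
    case 1
    then show ?thesis
      using chain_vanishingD[OF F is_chain_lower_block[OF \<sigma> chain]] by (simp add: shuffle_term_def)
  next
    case 2
    then show ?thesis
      using chain_vanishingD[OF G is_chain_upper_block[OF \<sigma> chain \<open>0 < p\<close>]] by (simp add: shuffle_term_def)
  next
    case 3
    let ?j' = "if j = 0 then p - 1 else j - 1"
    have "?j' < p"
      using \<open>j < p\<close> by auto
    then have "\<iota> ?j' < k + l"
      using chain unfolding is_chain_def by blast
    then have "inv \<sigma> (\<iota> j) < k" "inv \<sigma> (\<iota> ?j') \<in> {k..<k+l}"
      using 3 inv_permutes_upper_block[OF \<sigma>] permutes_inverses(2)[OF \<sigma>] by auto
    moreover have "a (\<sigma> (inv \<sigma> (\<iota> j))) - a (\<sigma> (inv \<sigma> (\<iota> ?j'))) + 1 = 0"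
      using is_chain_step[OF chain _ \<open>j < p\<close>] of_nat_CHAR[where 'a='a] char
      by (simp only: permutes_inverses(1)[OF \<sigma>])
    ultimately show ?thesis
      unfolding shuffle_term_def by (force intro: prod_zero)
  qed
qed

lemma star_chain_vanishing:
  fixes F G :: "'a::field mpoly"
  assumes inf: "infinite (UNIV::'a set)" and two: "(2::'a) \<noteq> 0"
    and char: "CHAR('a) = p" and "0 < p"
    and F: "F \<in> chain_vanishing p k" and G: "G \<in> chain_vanishing p l"
  shows "star k l F G \<in> chain_vanishing p (k+l)"
proof -
  note FG = inf two chain_vanishing_Wk[OF F] chain_vanishing_Wk[OF G]
  have "mp_eval (star k l F G) a = 0" if chain: "is_chain p (k+l) \<iota> a" for \<iota> a
  proof (rule poly_fun_eq_0_if_eq_0_on_inj_extensions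
      [OF inf, of "k+l" "mp_eval (star k l F G)" "{..<k+l} - \<iota> ` {..<p}" a])
    show "poly_fun (k+l) (mp_eval (star k l F G))"
      by (rule poly_fun_mp_eval[OF Wk_vars_below[OF star_Wk[OF FG]]])
    have "\<iota> ` {..<p} \<subseteq> {..<k+l}"
      using chain by (simp add: is_chain_def)
    then show "inj_on a ({..<k+l} - ({..<k+l} - \<iota> ` {..<p}))"
      using is_chain_inj[OF chain char] by (simp add: Diff_Diff_Int inf.absorb2)
    fix b assume agree: "\<And>i. i \<notin> {..<k+l} - \<iota> ` {..<p} \<Longrightarrow> b i = a i" and "inj_on b {..<k+l}"
    have "is_chain p (k+l) \<iota> b"
      using chain agree \<open>0 < p\<close> by (auto simp: is_chain_def)
    then show "mp_eval (star k l F G) b = 0"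
      using mp_eval_star[OF FG \<open>inj_on b {..<k+l}\<close>]
        shuffle_term_eq_0_at_chain[OF char \<open>0 < p\<close> F G] by (simp add: shuffle_sum_def)
  qed simp
  then show ?thesis
    using star_Wk[OF FG] by (simp add: chain_vanishing_def)
qed

lemma imPsi_chain_vanishing:
  fixes w :: "nat \<Rightarrow> 'a::field mpoly"
  assumes inf: "infinite (UNIV::'a set)" and char: "CHAR('a) = p" and "2 < p"
    and "w \<in> imPsi"
  shows "w n \<in> chain_vanishing p n"
  using \<open>w \<in> imPsi\<close>
proof (induction arbitrary: n rule: imPsi.induct)
  case (gen r)
  have "mp_x0pow r \<in> (Wk 1 :: 'a mpoly set)"
    by (rule Wk_if_le_1) (auto simp: vars_below_def mp_x0pow_def)
  then show ?case
    using \<open>2 < p\<close> by (simp add: Psi_gen_def zero_chain_vanishing chain_vanishing_if_less)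
next
  case one
  have "mp_const 1 \<in> (Wk 0 :: 'a mpoly set)"
    by (rule Wk_if_le_1) (simp_all add: vars_below_const)
  then show ?case
    using \<open>2 < p\<close> by (simp add: Wone_def zero_chain_vanishing chain_vanishing_if_less)
next
  case (add w v)
  then show ?case by (simp add: add_chain_vanishing)
next
  case (scale w c)
  then show ?case by (simp add: Wscale_def map_mult_chain_vanishing)
next
  case (mult w v)
  have "(2::'a) \<noteq> 0"
    using \<open>2 < p\<close> char of_nat_eq_0_iff_char_dvd[of 2] by (auto dest: dvd_imp_le)
  then have star: "star k (n - k) (w k) (v (n - k)) \<in> chain_vanishing p (k + (n - k))" for k
    using star_chain_vanishing[OF inf _ char _ mult.IH] \<open>2 < p\<close> by simp
  have "star k (n - k) (w k) (v (n - k)) \<in> chain_vanishing p n" if "k \<le> n" for k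
    using star[of k] that by simp
  then show ?case
    unfolding Wmult_def by (intro sum_chain_vanishing) simp
qed

theorem proposition3p1:
  fixes p :: nat
  assumes "CHAR('a::alg_closed_field) = p" and "prime p" and "p > 2"
  shows "\<forall>k. \<forall>w \<in> (imPsi :: (nat \<Rightarrow> 'a mpoly) set).
           (\<forall>n. n \<noteq> k \<longrightarrow> w n = 0) \<longrightarrow> w k \<in> Jk p k"
proof (intro allI ballI impI)
  fix k and w :: "nat \<Rightarrow> 'a mpoly"
  assume "w \<in> imPsi"
  text \<open>Every graded component of an element of the image vanishes on chains.\<close>
  have "w k \<in> chain_vanishing p k"
    using imPsi_chain_vanishing[OF infinite_UNIV_alg_closed assms(1,3) \<open>w \<in> imPsi\<close>] .
  then show "w k \<in> Jk p k"
    using chain_vanishing_subset_Jk by blast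
qed

end
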